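(* Let $d$ be a positive integer and $\mathcal{G}$ a hereditary class of finite graphs such that $\max\{\alpha^{\ast}(G),\widetilde{\omega}(G)\}\le d$ for every $G\in\mathcal{G}$. Then the parameters $\alpha\text{-}\mathsf{tw}$, $\mathsf{rw}$ and $G\mapsto\mathsf{tw}(\widetilde{G})$ are pairwise equivalent on $\mathcal{G}$, i.e. for any two $p,q$ of them there is a function $g\colon\mathbb{N}\to\mathbb{N}$ with $q(G)\le g(p(G))$ for all $G\in\mathcal{G}$.
   Context: Hereditary means closed under induced subgraphs. Two vertices are equivalent if they lie in exactly the same maximal cliques; $\widetilde{G}$ is the clique-quotient graph (equivalence classes as vertices, two distinct classes adjacent iff representatives are adjacent). $\widetilde{\omega}(G)$ is the maximum over maximal cliques $K$ of the number of equivalence classes meeting $K$. $\alpha^{\ast}(G)=\max_v\alpha(G[N[v]])$. $\alpha\text{-}\mathsf{tw}(G)$ is the minimum over tree-decompositions of the maximum independence number of a bag; $\mathsf{tw}(H)$ is the minimum over tree-decompositions of $H$ of the maximum bag size. Rankwidth $\mathsf{rw}(G)$: the cutrank of $X\subseteq V(G)$ is the $\mathbb{F}_2$-rank of the adjacency submatrix with rows $X$ and columns $V(G)\setminus X$; a rank-decomposition is a tree with internal nodes of degree $3$ and a bijection from its leaves to $V(G)$; its width is the maximum over tree edges of the cutrank of the vertices mapped to one side; $\mathsf{rw}(G)$ is the minimum width. *)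

theory Defs
  imports Main
begin

type_synonym 'a graph = "'a set \<times> ('a \<times> 'a) set"

definition verts :: "'a graph \<Rightarrow> 'a set" where "verts G = fst G"
definition edges :: "'a graph \<Rightarrow> ('a \<times> 'a) set" where "edges G = snd G"
definition adj :: "'a graph \<Rightarrow> 'a \<Rightarrow> 'a \<Rightarrow> bool" where "adj G u v \<longleftrightarrow> (u, v) \<in> edges G"

definition finite_graph :: "'a graph \<Rightarrow> bool" where
  "finite_graph G \<longleftrightarrow> finite (verts G) \<and> edges G \<subseteq> verts G \<times> verts G
     \<and> sym (edges G) \<and> (\<forall>x. (x, x) \<notin> edges G)"

definition induced :: "'a graph \<Rightarrow> 'a set \<Rightarrow> 'a graph" where
  "induced G S = (S \<inter> verts G, edges G \<inter> (S \<times> S))"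

definition hereditary :: "'a graph set \<Rightarrow> bool" where
  "hereditary \<G> \<longleftrightarrow> (\<forall>G\<in>\<G>. \<forall>S. S \<subseteq> verts G \<longrightarrow> induced G S \<in> \<G>)"

definition connected_in :: "('a \<times> 'a) set \<Rightarrow> 'a set \<Rightarrow> bool" where
  "connected_in E S \<longleftrightarrow> (\<forall>x\<in>S. \<forall>y\<in>S. (x, y) \<in> (E \<inter> (S \<times> S))\<^sup>*)"

definition clique :: "'a graph \<Rightarrow> 'a set \<Rightarrow> bool" where
  "clique G K \<longleftrightarrow> K \<subseteq> verts G \<and> (\<forall>u\<in>K. \<forall>v\<in>K. u \<noteq> v \<longrightarrow> adj G u v)"

definition maximal_clique :: "'a graph \<Rightarrow> 'a set \<Rightarrow> bool" where
  "maximal_clique G K \<longleftrightarrow> clique G K \<and> (\<forall>K'. clique G K' \<and> K \<subseteq> K' \<longrightarrow> K' = K)"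

definition independent :: "'a graph \<Rightarrow> 'a set \<Rightarrow> bool" where
  "independent G I \<longleftrightarrow> I \<subseteq> verts G \<and> (\<forall>u\<in>I. \<forall>v\<in>I. \<not> adj G u v)"

definition alpha :: "'a graph \<Rightarrow> nat" where
  "alpha G = Max {card I | I. independent G I}"

definition closed_nbhd :: "'a graph \<Rightarrow> 'a \<Rightarrow> 'a set" where
  "closed_nbhd G v = insert v {u \<in> verts G. adj G v u}"

definition alpha_star :: "'a graph \<Rightarrow> nat" where
  "alpha_star G = Max (insert 0 {alpha (induced G (closed_nbhd G v)) | v. v \<in> verts G})"

definition clique_equiv :: "'a graph \<Rightarrow> 'a \<Rightarrow> 'a \<Rightarrow> bool" where
  "clique_equiv G u v \<longleftrightarrow> u \<in> verts G \<and> v \<in> verts G \<and>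
     (\<forall>K. maximal_clique G K \<longrightarrow> (u \<in> K \<longleftrightarrow> v \<in> K))"

definition eq_class :: "'a graph \<Rightarrow> 'a \<Rightarrow> 'a set" where
  "eq_class G v = {u. clique_equiv G v u}"

definition eq_classes :: "'a graph \<Rightarrow> 'a set set" where
  "eq_classes G = eq_class G ` verts G"

text \<open>Adjacency of classes: by equivalence of the vertices, adjacency of
  representatives does not depend on the choice of representatives.\<close>
definition clique_quotient :: "'a graph \<Rightarrow> 'a set graph" where
  "clique_quotient G = (eq_classes G,
     {(C, D). C \<in> eq_classes G \<and> D \<in> eq_classes G \<and> C \<noteq> D \<and>
              (\<exists>u\<in>C. \<exists>v\<in>D. adj G u v)})"

definition omega_tilde :: "'a graph \<Rightarrow> nat" where
  "omega_tilde G = Max (insert 0 {card {C \<in> eq_classes G. C \<inter> K \<noteq> {}} | K. maximal_clique G K})"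

text \<open>A tree on nodes N (of type nat) with symmetric irreflexive edge set E:
  nonempty, finite, connected, and every edge is a bridge (acyclic).\<close>
definition is_tree :: "nat set \<Rightarrow> (nat \<times> nat) set \<Rightarrow> bool" where
  "is_tree N E \<longleftrightarrow> finite N \<and> N \<noteq> {} \<and> E \<subseteq> N \<times> N \<and> sym E \<and> (\<forall>x. (x, x) \<notin> E)
     \<and> connected_in E N
     \<and> (\<forall>(x, y)\<in>E. (x, y) \<notin> (E - {(x, y), (y, x)})\<^sup>*)"

definition tree_decomposition ::
  "'a graph \<Rightarrow> nat set \<Rightarrow> (nat \<times> nat) set \<Rightarrow> (nat \<Rightarrow> 'a set) \<Rightarrow> bool" where
  "tree_decomposition G N E bag \<longleftrightarrow> is_tree N E
     \<and> (\<forall>t\<in>N. bag t \<subseteq> verts G)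
     \<and> (\<forall>v\<in>verts G. \<exists>t\<in>N. v \<in> bag t)
     \<and> (\<forall>u v. adj G u v \<longrightarrow> (\<exists>t\<in>N. u \<in> bag t \<and> v \<in> bag t))
     \<and> (\<forall>v\<in>verts G. connected_in E {t \<in> N. v \<in> bag t})"

definition treewidth :: "'a graph \<Rightarrow> nat" where
  "treewidth G = Inf {w. \<exists>N E bag. tree_decomposition G N E bag \<and>
                                   (\<forall>t\<in>N. card (bag t) \<le> w)}"

definition alpha_treewidth :: "'a graph \<Rightarrow> nat" where
  "alpha_treewidth G = Inf {w. \<exists>N E bag. tree_decomposition G N E bag \<and>
                                   (\<forall>t\<in>N. alpha (induced G (bag t)) \<le> w)}"

text \<open>Linear independence over GF(2) of the rows indexed by R of the adjacency
  matrix restricted to columns Y: no nonempty subset of rows sums to zero mod 2.\<close>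
definition gf2_rows_independent :: "'a graph \<Rightarrow> 'a set \<Rightarrow> 'a set \<Rightarrow> bool" where
  "gf2_rows_independent G R Y \<longleftrightarrow>
     (\<forall>S. S \<subseteq> R \<and> S \<noteq> {} \<longrightarrow> (\<exists>y\<in>Y. odd (card {x\<in>S. adj G x y})))"

text \<open>cutrank of X: GF(2)-rank of the adjacency submatrix with rows X and columns
  V(G) - X, i.e. the maximum number of linearly independent rows.\<close>
definition cutrank :: "'a graph \<Rightarrow> 'a set \<Rightarrow> nat" where
  "cutrank G X = Max {card R | R. R \<subseteq> X \<inter> verts G \<and>
                     gf2_rows_independent G R (verts G - X)}"

definition tree_degree :: "(nat \<times> nat) set \<Rightarrow> nat \<Rightarrow> nat" where
  "tree_degree E t = card {u. (t, u) \<in> E}"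

definition tree_leaves :: "nat set \<Rightarrow> (nat \<times> nat) set \<Rightarrow> nat set" where
  "tree_leaves N E = {t \<in> N. tree_degree E t \<le> 1}"

definition tree_side :: "nat set \<Rightarrow> (nat \<times> nat) set \<Rightarrow> nat \<Rightarrow> nat \<Rightarrow> nat set" where
  "tree_side N E s t = {u \<in> N. (s, u) \<in> (E - {(s, t), (t, s)})\<^sup>*}"

definition rank_decomposition ::
  "'a graph \<Rightarrow> nat set \<Rightarrow> (nat \<times> nat) set \<Rightarrow> (nat \<Rightarrow> 'a) \<Rightarrow> bool" where
  "rank_decomposition G N E f \<longleftrightarrow> is_tree N E
     \<and> (\<forall>t \<in> N - tree_leaves N E. tree_degree E t = 3)
     \<and> bij_betw f (tree_leaves N E) (verts G)"

definition rankwidth :: "'a graph \<Rightarrow> nat" where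
  "rankwidth G = Inf {w. \<exists>N E f. rank_decomposition G N E f \<and>
      (\<forall>(s, t)\<in>E. cutrank G (f ` (tree_leaves N E \<inter> tree_side N E s t)) \<le> w)}"

end

theory Submission
  imports Defs "HOL-Library.Ramsey"
begin

(*
  The three parameters are compared through the class-width of G: the least k such that
  G has a tree-decomposition each of whose bags meets at most k clique classes.

  Distinct vertices of one class are adjacent, so an independent set meets every class
  at most once and alpha-tw is at most the class-width. Conversely, representatives of
  classes forming a clique lie in one maximal clique, which meets at most d classes, so by
  Ramsey's theorem a bag with small independence number meets few classes.

  Replacing every bag by the set of classes it meets, or every bag of the quotient by the
  union of its classes, carries tree-decompositions between G and its clique-quotient.

  A rank-decomposition of width k yields a tree-decomposition on the same tree: the bag of
  a node collects the endpoints of the edges crossing the cuts at that node. These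
  endpoints fall into at most 2^k groups of equal cut rows, each group lies in a
  neighbourhood, and since alpha* is at most d, Ramsey's theorem again bounds the number
  of classes a neighbourhood meets. Conversely, a tree-decomposition can be unfolded into
  a binary tree on the vertices each of whose clusters has all outside neighbours in one
  bag; vertices of one class have equal adjacencies, so the cut-rank of such a cluster is
  at most the number of classes meeting that bag.
*)

section \<open>Graphs and clique classes\<close>

lemma finite_graph_adjD:
  assumes "finite_graph G" "adj G u v"
  shows "u \<in> verts G" "v \<in> verts G"
  using assms unfolding finite_graph_def adj_def by auto

lemma finite_graph_adj_sym: "finite_graph G \<Longrightarrow> adj G u v \<Longrightarrow> adj G v u"
  unfolding finite_graph_def adj_def by (auto dest: symD)

lemma finite_graph_not_adj_self: "finite_graph G \<Longrightarrow> \<not> adj G u u"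
  unfolding finite_graph_def adj_def by auto

lemma finite_graph_finite_verts: "finite_graph G \<Longrightarrow> finite (verts G)"
  unfolding finite_graph_def by auto

lemma verts_induced: "verts (induced G S) = S \<inter> verts G"
  unfolding induced_def verts_def by simp

lemma adj_induced: "adj (induced G S) u v \<longleftrightarrow> adj G u v \<and> u \<in> S \<and> v \<in> S"
  unfolding induced_def adj_def edges_def by auto

lemma independent_induced: "independent (induced G S) I \<longleftrightarrow> I \<subseteq> S \<and> independent G I"
  unfolding independent_def verts_induced adj_induced by auto

lemma clique_subset_maximal_clique:
  assumes G: "finite_graph G" and K: "Defs.clique G K"
  obtains K' where "maximal_clique G K'" "K \<subseteq> K'"
proof -
  let ?C = "{K'. Defs.clique G K' \<and> K \<subseteq> K'}"
  have "?C \<subseteq> Pow (verts G)" unfolding Defs.clique_def by auto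
  hence "finite ?C" using finite_graph_finite_verts[OF G] by (meson finite_Pow_iff finite_subset)
  then obtain M where M: "M \<in> ?C" "\<forall>K'\<in>?C. M \<subseteq> K' \<longrightarrow> M = K'"
    using finite_has_maximal[of ?C] K by blast
  hence "maximal_clique G M" unfolding maximal_clique_def by fastforce
  thus ?thesis using that M by blast
qed

lemma clique_equiv_adj_iff:
  assumes G: "finite_graph G" and uv: "clique_equiv G u v" and y: "y \<noteq> u" "y \<noteq> v"
  shows "adj G u y \<longleftrightarrow> adj G v y"
proof -
  have adj_transfer: "adj G b y"
    if ab: "clique_equiv G a b" and a: "adj G a y" and "y \<noteq> b" for a b
  proof -
    have "Defs.clique G {a, y}"
      using a finite_graph_adjD[OF G a] finite_graph_adj_sym[OF G a]
      unfolding Defs.clique_def by auto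
    then obtain K where "maximal_clique G K" "{a, y} \<subseteq> K"
      using clique_subset_maximal_clique[OF G] by blast
    moreover from this have "b \<in> K" using ab unfolding clique_equiv_def by auto
    ultimately show ?thesis using \<open>y \<noteq> b\<close> unfolding maximal_clique_def Defs.clique_def by auto
  qed
  have "clique_equiv G v u" using uv unfolding clique_equiv_def by auto
  thus ?thesis using adj_transfer uv y by blast
qed

lemma clique_equiv_adj:
  assumes G: "finite_graph G" and uv: "clique_equiv G u v" "u \<noteq> v"
  shows "adj G u v"
proof -
  have "Defs.clique G {u}" using uv unfolding Defs.clique_def clique_equiv_def by auto
  then obtain K where "maximal_clique G K" "u \<in> K" using clique_subset_maximal_clique[OF G] by blast
  moreover from this have "v \<in> K" using uv unfolding clique_equiv_def by auto
  ultimately show ?thesis using uv unfolding maximal_clique_def Defs.clique_def by auto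
qed

lemma clique_equiv_sym: "clique_equiv G u v \<Longrightarrow> clique_equiv G v u"
  and clique_equiv_trans: "clique_equiv G u v \<Longrightarrow> clique_equiv G v w \<Longrightarrow> clique_equiv G u w"
  unfolding clique_equiv_def by auto

lemma self_in_eq_class: "v \<in> verts G \<Longrightarrow> v \<in> eq_class G v"
  unfolding eq_class_def clique_equiv_def by auto

lemma eq_class_subset_verts: "eq_class G v \<subseteq> verts G"
  unfolding eq_class_def clique_equiv_def by auto

lemma eq_class_in_eq_classes: "v \<in> verts G \<Longrightarrow> eq_class G v \<in> eq_classes G"
  unfolding eq_classes_def by auto

lemma eq_classes_subset_verts: "C \<in> eq_classes G \<Longrightarrow> C \<subseteq> verts G"
  unfolding eq_classes_def using eq_class_subset_verts[of G] by auto

lemma finite_eq_classes: "finite_graph G \<Longrightarrow> finite (eq_classes G)"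
  unfolding eq_classes_def by (simp add: finite_graph_finite_verts)

lemma eq_classes_eq_class: "C \<in> eq_classes G \<Longrightarrow> u \<in> C \<Longrightarrow> C = eq_class G u"
  unfolding eq_classes_def eq_class_def by (auto intro: clique_equiv_sym clique_equiv_trans)

lemma eq_classes_clique_equiv: "C \<in> eq_classes G \<Longrightarrow> u \<in> C \<Longrightarrow> v \<in> C \<Longrightarrow> clique_equiv G u v"
  unfolding eq_classes_def eq_class_def by (auto intro: clique_equiv_sym clique_equiv_trans)

lemma eq_classes_disjoint:
  "C \<in> eq_classes G \<Longrightarrow> D \<in> eq_classes G \<Longrightarrow> u \<in> C \<Longrightarrow> u \<in> D \<Longrightarrow> C = D"
  using eq_classes_eq_class[of C G u] eq_classes_eq_class[of D G u] by simp

definition classes_meeting :: "'a graph \<Rightarrow> 'a set \<Rightarrow> 'a set set" where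
  "classes_meeting G Y = {C \<in> eq_classes G. C \<inter> Y \<noteq> {}}"

lemma finite_classes_meeting: "finite_graph G \<Longrightarrow> finite (classes_meeting G Y)"
  unfolding classes_meeting_def using finite_eq_classes[of G] by simp

lemma classes_meeting_mono: "Y \<subseteq> Z \<Longrightarrow> classes_meeting G Y \<subseteq> classes_meeting G Z"
  unfolding classes_meeting_def by auto

lemma classes_meeting_Un: "classes_meeting G (Y \<union> Z) = classes_meeting G Y \<union> classes_meeting G Z"
  unfolding classes_meeting_def by auto

lemma classes_meeting_UN: "classes_meeting G (\<Union>i\<in>I. Y i) = (\<Union>i\<in>I. classes_meeting G (Y i))"
  unfolding classes_meeting_def by auto

lemma eq_class_in_classes_meeting:
  "y \<in> Y \<Longrightarrow> y \<in> verts G \<Longrightarrow> eq_class G y \<in> classes_meeting G Y"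
  unfolding classes_meeting_def using self_in_eq_class[of y G] eq_class_in_eq_classes[of y G] by blast

lemma card_classes_meeting_le:
  assumes "finite Y"
  shows "card (classes_meeting G Y) \<le> card Y"
proof -
  have "classes_meeting G Y \<subseteq> eq_class G ` Y"
    unfolding classes_meeting_def using eq_classes_eq_class[of _ G] by blast
  hence "card (classes_meeting G Y) \<le> card (eq_class G ` Y)"
    using assms by (simp add: card_mono)
  also have "\<dots> \<le> card Y" using assms by (rule card_image_le)
  finally show ?thesis .
qed

lemma verts_clique_quotient: "verts (clique_quotient G) = eq_classes G"
  unfolding clique_quotient_def verts_def by simp

lemma adj_clique_quotient: "adj (clique_quotient G) C D \<longleftrightarrow>
    C \<in> eq_classes G \<and> D \<in> eq_classes G \<and> C \<noteq> D \<and> (\<exists>u\<in>C. \<exists>v\<in>D. adj G u v)"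
  unfolding clique_quotient_def adj_def edges_def by simp

lemma finite_alpha_candidates:
  "finite_graph G \<Longrightarrow> finite {card I | I. independent (induced G S) I}"
proof -
  assume G: "finite_graph G"
  have "{card I | I. independent (induced G S) I} \<subseteq> card ` Pow (verts G)"
    unfolding independent_def verts_induced by auto
  thus ?thesis using finite_graph_finite_verts[OF G] by (simp add: finite_subset)
qed

lemma card_le_alpha_induced:
  assumes "finite_graph G" "independent G I" "I \<subseteq> S"
  shows "card I \<le> alpha (induced G S)"
  unfolding alpha_def using assms independent_induced[of G S I]
  by (intro Max_ge[OF finite_alpha_candidates]) auto

lemma alpha_induced_le:
  assumes G: "finite_graph G" and b: "\<And>I. independent G I \<Longrightarrow> I \<subseteq> S \<Longrightarrow> card I \<le> b"
  shows "alpha (induced G S) \<le> b"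
proof -
  have "independent (induced G S) {}" unfolding independent_def by simp
  thus ?thesis unfolding alpha_def using b independent_induced[of G S]
    by (subst Max_le_iff[OF finite_alpha_candidates[OF G]]) auto
qed

lemma card_classes_meeting_le_omega_tilde:
  assumes G: "finite_graph G" and K: "maximal_clique G K"
  shows "card (classes_meeting G K) \<le> omega_tilde G"
proof -
  have "{K. maximal_clique G K} \<subseteq> Pow (verts G)"
    unfolding maximal_clique_def Defs.clique_def by auto
  hence "finite {K. maximal_clique G K}"
    using finite_graph_finite_verts[OF G] by (simp add: finite_subset)
  thus ?thesis unfolding omega_tilde_def classes_meeting_def[symmetric]
    using K by (intro Max_ge) auto
qed

lemma alpha_closed_nbhd_le_alpha_star:
  assumes "finite_graph G" "v \<in> verts G"
  shows "alpha (induced G (closed_nbhd G v)) \<le> alpha_star G"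
  unfolding alpha_star_def using assms finite_graph_finite_verts[of G] by (intro Max_ge) auto

lemma classes_meeting_representatives:
  obtains A where "A \<subseteq> Y \<inter> verts G" "bij_betw (eq_class G) A (classes_meeting G Y)"
proof -
  define rep where "rep C = (SOME y. y \<in> C \<inter> Y)" for C
  have rep: "rep C \<in> C \<inter> Y" if "C \<in> classes_meeting G Y" for C
  proof -
    have "\<exists>y. y \<in> C \<inter> Y" using that unfolding classes_meeting_def by blast
    thus ?thesis unfolding rep_def by (rule someI_ex)
  qed
  have rep_class: "eq_class G (rep C) = C" if "C \<in> classes_meeting G Y" for C
    using rep[OF that] that eq_classes_eq_class[of C G] unfolding classes_meeting_def by auto
  have "bij_betw (eq_class G) (rep ` classes_meeting G Y) (classes_meeting G Y)"
    by (rule bij_betw_byWitness[where f' = rep]) (use rep_class in auto)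
  moreover have "rep ` classes_meeting G Y \<subseteq> Y \<inter> verts G"
    using rep eq_classes_subset_verts[of _ G] unfolding classes_meeting_def by blast
  ultimately show thesis using that by blast
qed

text \<open>Representatives of distinct classes forming a clique lie in one maximal clique, which
  meets all their classes; so Ramsey's theorem bounds the number of classes met by a set
  without large independent subsets.\<close>
lemma classes_meeting_ramsey_bound:
  fixes d a :: nat
  obtains B where "\<And>(G :: 'a graph) Y. finite_graph G \<Longrightarrow> omega_tilde G \<le> d \<Longrightarrow>
      (\<And>I. independent G I \<Longrightarrow> I \<subseteq> Y \<Longrightarrow> card I \<le> a) \<Longrightarrow> card (classes_meeting G Y) < B"
proof -
  obtain r where r: "\<forall>(V :: 'a set) E. finite V \<and> r \<le> card V \<longrightarrow>
      (\<exists>R\<subseteq>V. card R = Suc d \<and> Ramsey.clique R E \<or> card R = Suc a \<and> indep R E)"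
    using ramsey2 by blast
  have "card (classes_meeting G Y) < r"
    if G: "finite_graph G" and om: "omega_tilde G \<le> d"
      and ind: "\<And>I. independent G I \<Longrightarrow> I \<subseteq> Y \<Longrightarrow> card I \<le> a" for G :: "'a graph" and Y
  proof (rule ccontr)
    assume "\<not> card (classes_meeting G Y) < r"
    obtain A where A: "A \<subseteq> Y \<inter> verts G" "bij_betw (eq_class G) A (classes_meeting G Y)"
      by (rule classes_meeting_representatives)
    have finA: "finite A" using A(1) finite_graph_finite_verts[OF G] by (meson finite_Int finite_subset)
    have "r \<le> card A" using \<open>\<not> card (classes_meeting G Y) < r\<close> bij_betw_same_card[OF A(2)] by simp
    define E where "E = {{u, v} | u v. adj G u v}"
    have adj_iff: "{u, v} \<in> E \<longleftrightarrow> adj G u v" for u v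
      unfolding E_def using finite_graph_adj_sym[OF G] by (auto simp: doubleton_eq_iff)
    obtain R where R: "R \<subseteq> A"
      "card R = Suc d \<and> Ramsey.clique R E \<or> card R = Suc a \<and> indep R E"
      using r[rule_format, of A E] finA \<open>r \<le> card A\<close> by blast
    have RV: "R \<subseteq> verts G" using R(1) A(1) by blast
    show False
    proof (cases "Ramsey.clique R E \<and> card R = Suc d")
      case True
      hence "Defs.clique G R" using RV adj_iff unfolding Ramsey.clique_def Defs.clique_def by blast
      then obtain K where K: "maximal_clique G K" "R \<subseteq> K"
        using clique_subset_maximal_clique[OF G] by blast
      have "eq_class G ` R \<subseteq> classes_meeting G K"
        using K(2) RV eq_class_in_classes_meeting[of _ K G] by blast
      moreover have "card (eq_class G ` R) = Suc d"
        using True bij_betw_imp_inj_on[OF A(2)] R(1) by (simp add: card_image inj_on_subset)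
      ultimately have "Suc d \<le> card (classes_meeting G K)"
        using finite_classes_meeting[OF G] by (metis card_mono)
      thus False using card_classes_meeting_le_omega_tilde[OF G K(1)] om by simp
    next
      case False
      hence "indep R E" "card R = Suc a" using R(2) by auto
      moreover from this have "independent G R"
        using RV adj_iff finite_graph_not_adj_self[OF G] unfolding indep_def independent_def by metis
      ultimately show False using ind[of R] R(1) A(1) by auto
    qed
  qed
  thus thesis using that by blast
qed

section \<open>Cut-rank\<close>

lemma finite_cutrank_candidates:
  "finite (verts G) \<Longrightarrow>
    finite {card R | R. R \<subseteq> Z \<inter> verts G \<and> gf2_rows_independent G R (verts G - Z)}"
  by (rule finite_subset[of _ "card ` Pow (Z \<inter> verts G)"]) auto

lemma cutrank_le:
  assumes "finite (verts G)"
    and "\<And>R. R \<subseteq> Z \<inter> verts G \<Longrightarrow> gf2_rows_independent G R (verts G - Z) \<Longrightarrow> card R \<le> b"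
  shows "cutrank G Z \<le> b"
proof -
  have "gf2_rows_independent G {} (verts G - Z)" unfolding gf2_rows_independent_def by simp
  thus ?thesis unfolding cutrank_def using assms
    by (subst Max_le_iff[OF finite_cutrank_candidates]) auto
qed

lemma card_le_cutrank:
  assumes "finite (verts G)" "R \<subseteq> Z \<inter> verts G" "gf2_rows_independent G R (verts G - Z)"
  shows "card R \<le> cutrank G Z"
  unfolding cutrank_def using assms by (intro Max_ge[OF finite_cutrank_candidates]) auto

lemma cutrank_witness:
  assumes "finite (verts G)"
  obtains R where "R \<subseteq> Z \<inter> verts G" "gf2_rows_independent G R (verts G - Z)"
    "card R = cutrank G Z"
proof -
  have "gf2_rows_independent G {} (verts G - Z)" unfolding gf2_rows_independent_def by simp
  hence "cutrank G Z \<in> {card R | R. R \<subseteq> Z \<inter> verts G \<and> gf2_rows_independent G R (verts G - Z)}"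
    unfolding cutrank_def using finite_cutrank_candidates[OF assms] by (intro Max_in) auto
  thus thesis using that by auto
qed

lemma cutrank_empty_graph: "verts G = {} \<Longrightarrow> cutrank G Z = 0"
  using cutrank_le[of G Z 0] by simp

lemma even_card_symdiff:
  assumes "finite A" "finite B"
  shows "even (card ((A - B) \<union> (B - A))) \<longleftrightarrow> (even (card A) \<longleftrightarrow> even (card B))"
proof -
  have "card A = card (A \<inter> B) + card (A - B)" "card B = card (A \<inter> B) + card (B - A)"
    using card_Int_Diff[OF assms(1), of B] card_Int_Diff[OF assms(2), of A]
    by (simp_all add: Int_commute)
  moreover have "card ((A - B) \<union> (B - A)) = card (A - B) + card (B - A)"
    using assms by (intro card_Un_disjoint) auto
  ultimately show ?thesis by auto
qed

text \<open>In matrix terms: the rank of a cut matrix is at most the number of classes of equal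
  rows (resp. columns) covering its nonzero rows (resp. columns).\<close>
lemma cutrank_le_card_row_classes:
  assumes G: "finite_graph G" and fin: "finite \<C>"
    and cover: "\<And>x y. x \<in> Z \<Longrightarrow> y \<in> verts G - Z \<Longrightarrow> adj G x y \<Longrightarrow> \<exists>C\<in>\<C>. x \<in> C"
    and equal_rows: "\<And>C u v y. C \<in> \<C> \<Longrightarrow> u \<in> C \<inter> Z \<Longrightarrow> v \<in> C \<inter> Z \<Longrightarrow> y \<in> verts G - Z \<Longrightarrow>
      adj G u y \<longleftrightarrow> adj G v y"
  shows "cutrank G Z \<le> card \<C>"
proof (rule cutrank_le[OF finite_graph_finite_verts[OF G]])
  fix R assume R: "R \<subseteq> Z \<inter> verts G" "gf2_rows_independent G R (verts G - Z)"
  have "\<exists>C. C \<in> \<C> \<and> r \<in> C" if "r \<in> R" for r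
  proof -
    have "{r} \<subseteq> R" using \<open>r \<in> R\<close> by simp
    then obtain y where "y \<in> verts G - Z" "odd (card {x \<in> {r}. adj G x y})"
      using R(2) unfolding gf2_rows_independent_def by blast
    moreover from this have "adj G r y" by (simp add: Collect_conv_if split: if_splits)
    ultimately show ?thesis using cover R(1) \<open>r \<in> R\<close> by blast
  qed
  then obtain h where h: "\<And>r. r \<in> R \<Longrightarrow> h r \<in> \<C> \<and> r \<in> h r" by metis
  have "inj_on h R"
  proof (rule inj_onI, rule ccontr)
    fix r r' assume rr': "r \<in> R" "r' \<in> R" "h r = h r'" "r \<noteq> r'"
    hence "{r, r'} \<subseteq> R" by simp
    then obtain y where y: "y \<in> verts G - Z" "odd (card {x \<in> {r, r'}. adj G x y})"
      using R(2) unfolding gf2_rows_independent_def by blast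
    have "adj G r y \<longleftrightarrow> adj G r' y"
      using equal_rows[of "h r" r r' y] h rr' R(1) y(1) by auto
    hence "{x \<in> {r, r'}. adj G x y} = (if adj G r y then {r, r'} else {})" by auto
    thus False using y(2) rr'(4) by (auto split: if_splits)
  qed
  moreover have "h ` R \<subseteq> \<C>" using h by auto
  ultimately show "card R \<le> card \<C>" using card_inj_on_le[OF _ _ fin] by blast
qed

lemma cutrank_le_card_col_classes:
  assumes G: "finite_graph G" and fin: "finite \<C>"
    and cover: "\<And>x y. x \<in> Z \<Longrightarrow> y \<in> verts G - Z \<Longrightarrow> adj G x y \<Longrightarrow> \<exists>C\<in>\<C>. y \<in> C"
    and equal_cols: "\<And>C u v x. C \<in> \<C> \<Longrightarrow> u \<in> C - Z \<Longrightarrow> v \<in> C - Z \<Longrightarrow> x \<in> Z \<Longrightarrow>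
      adj G x u \<longleftrightarrow> adj G x v"
  shows "cutrank G Z \<le> card \<C>"
proof (rule cutrank_le[OF finite_graph_finite_verts[OF G]])
  fix R assume R: "R \<subseteq> Z \<inter> verts G" "gf2_rows_independent G R (verts G - Z)"
  have finR: "finite R" using R(1) finite_graph_finite_verts[OF G] by (meson finite_Int finite_subset)
  define \<C>' where "\<C>' = {C \<in> \<C>. C \<inter> (verts G - Z) \<noteq> {}}"
  have "\<exists>y. y \<in> C \<inter> (verts G - Z)" if "C \<in> \<C>'" for C using that unfolding \<C>'_def by blast
  then obtain rep where rep: "\<And>C. C \<in> \<C>' \<Longrightarrow> rep C \<in> C \<inter> (verts G - Z)" by metis
  define Y where "Y = rep ` \<C>'"
  have "finite \<C>'" "\<C>' \<subseteq> \<C>" using fin unfolding \<C>'_def by auto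
  hence finY: "finite Y" and cardY: "card Y \<le> card \<C>"
    unfolding Y_def using card_image_le[of \<C>' rep] card_mono[OF fin, of \<C>'] by auto
  text \<open>A set of rows is determined by the parities of its column sums on \<open>Y\<close>.\<close>
  define parity where "parity S = {y \<in> Y. odd (card {x \<in> S. adj G x y})}" for S
  have "inj_on parity (Pow R)"
  proof (rule inj_onI, rule ccontr)
    fix S1 S2 assume S: "S1 \<in> Pow R" "S2 \<in> Pow R" "parity S1 = parity S2" "S1 \<noteq> S2"
    define S where "S = (S1 - S2) \<union> (S2 - S1)"
    have "S \<subseteq> R" "S \<noteq> {}" using S unfolding S_def by auto
    then obtain y where y: "y \<in> verts G - Z" "odd (card {x \<in> S. adj G x y})"
      using R(2) unfolding gf2_rows_independent_def by blast
    hence "{x \<in> S. adj G x y} \<noteq> {}" by (metis card.empty even_zero)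
    then obtain x where "x \<in> S" "adj G x y" by blast
    then obtain C where C: "C \<in> \<C>" "y \<in> C"
      using cover[of x y] y(1) \<open>S \<subseteq> R\<close> R(1) by blast
    hence C': "C \<in> \<C>'" unfolding \<C>'_def using y(1) by auto
    have same_col: "{x \<in> T. adj G x y} = {x \<in> T. adj G x (rep C)}" if "T \<subseteq> R" for T
      using equal_cols[OF C(1), of y "rep C"] rep[OF C'] C(2) y(1) that R(1) by auto
    have "{x \<in> S. adj G x y} = ({x \<in> S1. adj G x y} - {x \<in> S2. adj G x y})
        \<union> ({x \<in> S2. adj G x y} - {x \<in> S1. adj G x y})"
      unfolding S_def by auto
    moreover have "finite S1" "finite S2" using S(1,2) finR by (auto intro: finite_subset)
    ultimately have "odd (card {x \<in> S1. adj G x y}) \<noteq> odd (card {x \<in> S2. adj G x y})"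
      using y(2) even_card_symdiff[of "{x \<in> S1. adj G x y}" "{x \<in> S2. adj G x y}"] by auto
    moreover have "rep C \<in> parity S1 \<longleftrightarrow> rep C \<in> parity S2" using S(3) by simp
    ultimately show False
      using same_col S(1,2) rep[OF C'] C' unfolding parity_def Y_def by auto
  qed
  moreover have "parity ` Pow R \<subseteq> Pow Y" unfolding parity_def by auto
  ultimately have "card (Pow R) \<le> card (Pow Y)" using finY by (intro card_inj_on_le) auto
  hence "card R \<le> card Y" using finR finY by (simp add: card_Pow)
  thus "card R \<le> card \<C>" using cardY by simp
qed

lemma cutrank_le_card_classes_meeting_rows:
  assumes G: "finite_graph G"
    and B: "\<And>x y. x \<in> Z \<Longrightarrow> y \<in> verts G - Z \<Longrightarrow> adj G x y \<Longrightarrow> x \<in> B"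
  shows "cutrank G Z \<le> card (classes_meeting G B)"
proof (rule cutrank_le_card_row_classes[OF G finite_classes_meeting[OF G]])
  fix x y assume "x \<in> Z" "y \<in> verts G - Z" "adj G x y"
  thus "\<exists>C\<in>classes_meeting G B. x \<in> C"
    using B finite_graph_adjD[OF G] self_in_eq_class[of x G] eq_class_in_classes_meeting[of x B G] by blast
next
  fix C u v y assume "C \<in> classes_meeting G B" "u \<in> C \<inter> Z" "v \<in> C \<inter> Z" "y \<in> verts G - Z"
  hence "clique_equiv G u v" "y \<noteq> u" "y \<noteq> v"
    using eq_classes_clique_equiv[of C G u v] unfolding classes_meeting_def by auto
  thus "adj G u y \<longleftrightarrow> adj G v y" using clique_equiv_adj_iff[OF G] by blast
qed

lemma cutrank_le_card_classes_meeting_cols: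
  assumes G: "finite_graph G"
    and B: "\<And>x y. x \<in> Z \<Longrightarrow> y \<in> verts G - Z \<Longrightarrow> adj G x y \<Longrightarrow> y \<in> B"
  shows "cutrank G Z \<le> card (classes_meeting G B)"
proof (rule cutrank_le_card_col_classes[OF G finite_classes_meeting[OF G]])
  fix x y assume "x \<in> Z" "y \<in> verts G - Z" "adj G x y"
  thus "\<exists>C\<in>classes_meeting G B. y \<in> C"
    using B self_in_eq_class[of y G] eq_class_in_classes_meeting[of y B G] by blast
next
  fix C u v x assume "C \<in> classes_meeting G B" "u \<in> C - Z" "v \<in> C - Z" "x \<in> Z"
  hence "clique_equiv G u v" "x \<noteq> u" "x \<noteq> v"
    using eq_classes_clique_equiv[of C G u v] unfolding classes_meeting_def by auto
  thus "adj G x u \<longleftrightarrow> adj G x v"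
    using clique_equiv_adj_iff[OF G, of u v x] finite_graph_adj_sym[OF G] by blast
qed

lemma row_in_span_of_cutrank_witness:
  assumes G: "finite_graph G"
    and R: "R \<subseteq> Z \<inter> verts G" "gf2_rows_independent G R (verts G - Z)" "card R = cutrank G Z"
    and a: "a \<in> Z \<inter> verts G"
  obtains T where "T \<subseteq> R" "\<And>y. y \<in> verts G - Z \<Longrightarrow> adj G a y \<longleftrightarrow> odd (card {x \<in> T. adj G x y})"
proof (cases "a \<in> R")
  case True
  have "adj G a y \<longleftrightarrow> odd (card {x \<in> {a}. adj G x y})" for y
    by (simp add: Collect_conv_if)
  thus thesis using that[of "{a}"] True by blast
next
  case False
  have finR: "finite R" using R(1) finite_graph_finite_verts[OF G] by (meson finite_Int finite_subset)
  have "\<not> gf2_rows_independent G (insert a R) (verts G - Z)"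
    using card_le_cutrank[OF finite_graph_finite_verts[OF G], of "insert a R" Z] R a False finR by auto
  then obtain S where S: "S \<subseteq> insert a R" "S \<noteq> {}"
    "\<And>y. y \<in> verts G - Z \<Longrightarrow> even (card {x \<in> S. adj G x y})"
    unfolding gf2_rows_independent_def by blast
  have "a \<in> S" using S R(2) unfolding gf2_rows_independent_def by blast
  have "adj G a y \<longleftrightarrow> odd (card {x \<in> S - {a}. adj G x y})" if "y \<in> verts G - Z" for y
  proof -
    have "finite {x \<in> S - {a}. adj G x y}" using S(1) finR by (auto intro: finite_subset)
    moreover have "{x \<in> S. adj G x y} =
        (if adj G a y then insert a {x \<in> S - {a}. adj G x y} else {x \<in> S - {a}. adj G x y})"
      using \<open>a \<in> S\<close> by auto
    ultimately show ?thesis using S(3)[OF that] by (auto split: if_splits)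
  qed
  thus thesis using that[of "S - {a}"] S(1) by blast
qed

text \<open>The vertices of \<open>Z\<close> with a neighbour outside \<open>Z\<close> fall into at most
  \<open>2 ^ k\<close> groups of equal rows, and each group lies in one neighbourhood.\<close>
lemma card_classes_meeting_boundary_le:
  assumes G: "finite_graph G" and k: "cutrank G Z \<le> k"
    and M: "\<And>b. card (classes_meeting G {u. adj G b u}) \<le> M"
  shows "card (classes_meeting G {a \<in> Z \<inter> verts G. \<exists>y\<in>verts G - Z. adj G a y}) \<le> 2 ^ k * M"
proof -
  define D where "D = {a \<in> Z \<inter> verts G. \<exists>y\<in>verts G - Z. adj G a y}"
  obtain R where R: "R \<subseteq> Z \<inter> verts G" "gf2_rows_independent G R (verts G - Z)" "card R = cutrank G Z"
    using cutrank_witness[OF finite_graph_finite_verts[OF G]] by blast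
  have finR: "finite R" using R(1) finite_graph_finite_verts[OF G] by (meson finite_Int finite_subset)
  define group where
    "group T = {a \<in> D. \<forall>y\<in>verts G - Z. adj G a y \<longleftrightarrow> odd (card {x \<in> T. adj G x y})}" for T
  have group_bound: "card (classes_meeting G (group T)) \<le> M" for T
  proof (cases "group T = {}")
    case True thus ?thesis by (simp add: classes_meeting_def)
  next
    case False
    then obtain a0 b where "a0 \<in> group T" "b \<in> verts G - Z" "adj G a0 b"
      unfolding group_def D_def by blast
    hence "group T \<subseteq> {u. adj G b u}"
      unfolding group_def using finite_graph_adj_sym[OF G] by auto
    hence "card (classes_meeting G (group T)) \<le> card (classes_meeting G {u. adj G b u})"
      by (intro card_mono finite_classes_meeting[OF G] classes_meeting_mono)
    thus ?thesis using M[of b] by simp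
  qed
  have "D \<subseteq> (\<Union>T\<in>Pow R. group T)"
  proof
    fix a assume "a \<in> D"
    then obtain T where "T \<subseteq> R" "\<And>y. y \<in> verts G - Z \<Longrightarrow> adj G a y \<longleftrightarrow> odd (card {x \<in> T. adj G x y})"
      using row_in_span_of_cutrank_witness[OF G R] unfolding D_def by blast
    thus "a \<in> (\<Union>T\<in>Pow R. group T)" using \<open>a \<in> D\<close> unfolding group_def by blast
  qed
  hence "classes_meeting G D \<subseteq> classes_meeting G (\<Union>T\<in>Pow R. group T)"
    by (rule classes_meeting_mono)
  hence "classes_meeting G D \<subseteq> (\<Union>T\<in>Pow R. classes_meeting G (group T))"
    by (simp only: classes_meeting_UN)
  hence "card (classes_meeting G D) \<le> card (\<Union>T\<in>Pow R. classes_meeting G (group T))"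
    using finR by (intro card_mono) (auto simp: finite_classes_meeting[OF G])
  also have "\<dots> \<le> (\<Sum>T\<in>Pow R. card (classes_meeting G (group T)))"
    using finR by (intro card_UN_le) simp
  also have "\<dots> \<le> (\<Sum>T\<in>Pow R. M)" by (intro sum_mono group_bound)
  also have "\<dots> = 2 ^ card R * M" using finR by (simp add: card_Pow)
  also have "\<dots> \<le> 2 ^ k * M" using R(3) k by (simp add: power_increasing)
  finally show ?thesis unfolding D_def .
qed

section \<open>Sides of a tree edge\<close>

abbreviation uedge :: "nat \<Rightarrow> nat \<Rightarrow> (nat \<times> nat) set" where
  "uedge x y \<equiv> {(x, y), (y, x)}"

lemma rtrancl_sym_flip: "sym R \<Longrightarrow> (x, y) \<in> R\<^sup>* \<Longrightarrow> (y, x) \<in> R\<^sup>*"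
  using symD[OF sym_rtrancl] .

lemma sym_Diff_uedge: "sym R \<Longrightarrow> sym (R - uedge x y)"
  unfolding sym_def by auto

lemma rtrancl_closed:
  assumes "R \<subseteq> N \<times> N" "(a, b) \<in> R\<^sup>*" "a \<in> N"
  shows "b \<in> N"
  using assms(2) by (induction rule: rtrancl_induct) (use assms in auto)

lemma rtrancl_first_edge:
  assumes "(x, z) \<in> R\<^sup>*" "x \<noteq> z"
  obtains x' where "(x, x') \<in> R" "(x', z) \<in> (R - {(x, x'), (x', x)})\<^sup>*"
proof -
  from assms have "\<exists>x'. (x, x') \<in> R \<and> (x', z) \<in> (R - {(x, x'), (x', x)})\<^sup>*"
  proof (induction rule: rtrancl_induct)
    case (step z z')
    show ?case
    proof (cases "x = z")
      case False
      then obtain x' where x': "(x, x') \<in> R" "(x', z) \<in> (R - {(x, x'), (x', x)})\<^sup>*"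
        using step by auto
      moreover have "(z, z') \<in> R - {(x, x'), (x', x)}" using step(2,4) False by auto
      ultimately show ?thesis by (blast intro: rtrancl_into_rtrancl)
    qed (use step in auto)
  qed simp
  thus thesis using that by blast
qed

lemma rtrancl_restrict_reachable:
  assumes "(a, z) \<in> R\<^sup>*" "\<And>w. (a, w) \<in> R\<^sup>* \<Longrightarrow> w \<in> Q"
  shows "(a, z) \<in> (R \<inter> Q \<times> Q)\<^sup>*"
  using assms
proof (induction rule: rtrancl_induct)
  case (step y z)
  have "y \<in> Q" "z \<in> Q" using step.prems step.hyps by (auto intro: rtrancl_into_rtrancl)
  moreover have "(a, y) \<in> (R \<inter> Q \<times> Q)\<^sup>*" using step.IH step.prems by blast
  ultimately show ?case using step.hyps(2) by (simp add: rtrancl_into_rtrancl)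
qed simp

lemma connected_in_mono_rtrancl:
  assumes "A \<subseteq> U" "(x, y) \<in> (E \<inter> A \<times> A)\<^sup>*"
  shows "(x, y) \<in> (E \<inter> U \<times> U)\<^sup>*"
proof -
  have "E \<inter> A \<times> A \<subseteq> E \<inter> U \<times> U" using assms(1) by auto
  thus ?thesis using assms(2) rtrancl_mono by blast
qed

context
  fixes N :: "nat set" and E :: "(nat \<times> nat) set"
  assumes tree: "is_tree N E"
begin

lemma tree_finite: "finite N" and tree_nonempty: "N \<noteq> {}" and tree_edges_subset: "E \<subseteq> N \<times> N"
  and tree_sym: "sym E" and tree_irrefl: "(x, x) \<notin> E"
  using tree unfolding is_tree_def by auto

lemma tree_edgeD: "(x, y) \<in> E \<Longrightarrow> x \<in> N \<and> y \<in> N"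
  using tree_edges_subset by auto

lemma tree_edge_sym: "(x, y) \<in> E \<Longrightarrow> (y, x) \<in> E"
  using tree_sym unfolding sym_def by auto

lemma tree_connected: "x \<in> N \<Longrightarrow> y \<in> N \<Longrightarrow> (x, y) \<in> E\<^sup>*"
  using tree unfolding is_tree_def connected_in_def by (meson Int_lower1 rtrancl_mono subsetD)

lemma tree_bridge: "(x, y) \<in> E \<Longrightarrow> (x, y) \<notin> (E - uedge x y)\<^sup>*"
  using tree unfolding is_tree_def by auto

lemma finite_tree_nbrs: "finite {u. (t, u) \<in> E}"
  using tree_finite tree_edges_subset by (auto intro: finite_subset)

lemma tree_side_iff: "x \<in> N \<Longrightarrow> z \<in> tree_side N E x y \<longleftrightarrow> (x, z) \<in> (E - uedge x y)\<^sup>*"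
  unfolding tree_side_def using rtrancl_closed[of "E - uedge x y" N x z] tree_edges_subset by auto

lemma tree_side_subset: "tree_side N E x y \<subseteq> N"
  unfolding tree_side_def by auto

lemma tree_side_self: "x \<in> N \<Longrightarrow> x \<in> tree_side N E x y"
  unfolding tree_side_def by auto

lemma tree_side_cover:
  assumes e: "(x, y) \<in> E" and z: "z \<in> N"
  shows "z \<in> tree_side N E x y \<or> z \<in> tree_side N E y x"
proof -
  have xN: "x \<in> N" and yN: "y \<in> N" using tree_edgeD[OF e] by auto
  from tree_connected[OF xN z] show ?thesis
  proof (induction rule: rtrancl_induct)
    case base thus ?case using tree_side_self[OF xN] by auto
  next
    case (step u w)
    show ?case
    proof (cases "(u, w) \<in> uedge x y")
      case True thus ?thesis using tree_side_self[OF xN] tree_side_self[OF yN] by auto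
    next
      case False
      hence "(u, w) \<in> E - uedge x y" "(u, w) \<in> E - uedge y x" using step(2) by auto
      with step(3) show ?thesis
        unfolding tree_side_iff[OF xN] tree_side_iff[OF yN] by (auto intro: rtrancl_into_rtrancl)
    qed
  qed
qed

lemma tree_sides_disjoint:
  assumes e: "(x, y) \<in> E"
  shows "tree_side N E x y \<inter> tree_side N E y x = {}"
proof (rule ccontr)
  assume "\<not> ?thesis"
  then obtain z where z: "z \<in> tree_side N E x y" "z \<in> tree_side N E y x" by auto
  have xN: "x \<in> N" and yN: "y \<in> N" using tree_edgeD[OF e] by auto
  have "uedge y x = uedge x y" by auto
  hence "(x, z) \<in> (E - uedge x y)\<^sup>*" "(z, y) \<in> (E - uedge x y)\<^sup>*"
    using z tree_side_iff[OF xN] tree_side_iff[OF yN]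
      rtrancl_sym_flip[OF sym_Diff_uedge[OF tree_sym]] by auto
  thus False using tree_bridge[OF e] by (meson rtrancl_trans)
qed

lemma tree_side_other_end: "(x, y) \<in> E \<Longrightarrow> y \<notin> tree_side N E x y"
  using tree_sides_disjoint[of x y] tree_side_self[of y x] tree_edgeD[of x y] by blast

lemma tree_side_compl: "(x, y) \<in> E \<Longrightarrow> tree_side N E y x = N - tree_side N E x y"
  using tree_side_cover[of x y] tree_sides_disjoint[of x y] tree_side_subset[of y x] by blast

lemma tree_side_loop: "c \<in> N \<Longrightarrow> tree_side N E c c = N"
  using tree_connected tree_irrefl unfolding tree_side_def by auto

lemma connected_subset_tree_side:
  assumes e: "(c, c') \<in> E" and T: "connected_in E T" "c \<notin> T"
    and t: "t \<in> T" "t \<in> tree_side N E c' c"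
  shows "T \<subseteq> tree_side N E c' c"
proof
  fix b assume "b \<in> T"
  have c'N: "c' \<in> N" using tree_edgeD[OF e] by auto
  have "(t, b) \<in> (E \<inter> T \<times> T)\<^sup>*" using T t(1) \<open>b \<in> T\<close> unfolding connected_in_def by auto
  moreover have "E \<inter> T \<times> T \<subseteq> E - uedge c' c" using T(2) by auto
  ultimately have "(t, b) \<in> (E - uedge c' c)\<^sup>*" using rtrancl_mono by blast
  moreover have "(c', t) \<in> (E - uedge c' c)\<^sup>*" using t(2) tree_side_iff[OF c'N] by auto
  ultimately show "b \<in> tree_side N E c' c" using tree_side_iff[OF c'N] by (meson rtrancl_trans)
qed

lemma tree_side_child:
  assumes c: "c \<in> N" and t: "t \<in> tree_side N E c p" "t \<noteq> c"
  obtains c' where "(c, c') \<in> E" "c' \<noteq> p" "t \<in> tree_side N E c' c"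
proof -
  have "(c, t) \<in> (E - uedge c p)\<^sup>*" using t(1) tree_side_iff[OF c] by auto
  moreover have "c \<noteq> t" using t(2) by simp
  ultimately obtain c' where c': "(c, c') \<in> E - uedge c p" "(c', t) \<in> (E - uedge c p - uedge c c')\<^sup>*"
    by (rule rtrancl_first_edge)
  have "(c', t) \<in> (E - uedge c' c)\<^sup>*"
    using c'(2) rtrancl_mono[of "E - uedge c p - uedge c c'" "E - uedge c' c"] by auto
  moreover have "c' \<in> N" using c'(1) tree_edgeD by auto
  ultimately show thesis using that[of c'] c'(1) tree_side_iff[of c'] by auto
qed

lemma tree_side_child_subset:
  assumes e: "(c, c') \<in> E" and p: "c' \<noteq> p"
  shows "tree_side N E c' c \<subseteq> tree_side N E c p - {c}"
proof
  fix z assume z: "z \<in> tree_side N E c' c"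
  have cN: "c \<in> N" and c'N: "c' \<in> N" using tree_edgeD[OF e] by auto
  have c_out: "c \<notin> tree_side N E c' c" using tree_side_other_end[OF tree_edge_sym[OF e]] .
  have "(c', z) \<in> ((E - uedge c' c) \<inter> (- {c}) \<times> (- {c}))\<^sup>*"
    using z c_out tree_side_iff[OF c'N] by (intro rtrancl_restrict_reachable) auto
  moreover have "(E - uedge c' c) \<inter> (- {c}) \<times> (- {c}) \<subseteq> E - uedge c p" by auto
  ultimately have "(c', z) \<in> (E - uedge c p)\<^sup>*" using rtrancl_mono by blast
  moreover have "(c, c') \<in> E - uedge c p" using e p tree_irrefl by auto
  ultimately have "z \<in> tree_side N E c p"
    using tree_side_iff[OF cN] by (meson converse_rtrancl_into_rtrancl)
  thus "z \<in> tree_side N E c p - {c}" using z c_out by auto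
qed

end

section \<open>Class-width\<close>

lemma connected_in_Union:
  assumes E: "sym E" and conn: "\<And>S. S \<in> \<S> \<Longrightarrow> connected_in E S"
    and meet: "\<And>S. S \<in> \<S> \<Longrightarrow> S \<inter> S0 \<noteq> {}" and S0: "S0 \<in> \<S>"
  shows "connected_in E (\<Union>\<S>)"
  unfolding connected_in_def
proof (intro ballI)
  fix x y assume "x \<in> \<Union>\<S>" "y \<in> \<Union>\<S>"
  then obtain Sx Sy where S: "Sx \<in> \<S>" "x \<in> Sx" "Sy \<in> \<S>" "y \<in> Sy" by blast
  obtain a b where ab: "a \<in> Sx \<inter> S0" "b \<in> Sy \<inter> S0" using meet[OF S(1)] meet[OF S(3)] by blast
  let ?R = "E \<inter> \<Union>\<S> \<times> \<Union>\<S>"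
  have path: "(u, v) \<in> ?R\<^sup>*" if "S \<in> \<S>" "u \<in> S" "v \<in> S" for S u v
    using conn[OF that(1)] that(2,3) connected_in_mono_rtrancl[of S "\<Union>\<S>"] \<open>S \<in> \<S>\<close>
    unfolding connected_in_def by blast
  have "sym ?R" using E unfolding sym_def by blast
  hence "(b, y) \<in> ?R\<^sup>*" using path[OF S(3)] ab S(4) rtrancl_sym_flip by blast
  moreover have "(x, a) \<in> ?R\<^sup>*" "(a, b) \<in> ?R\<^sup>*" using path S ab S0 by blast+
  ultimately show "(x, y) \<in> ?R\<^sup>*" by (meson rtrancl_trans)
qed

definition class_width :: "'a graph \<Rightarrow> nat" where
  "class_width G = Inf {w. \<exists>N E bag. tree_decomposition G N E bag \<and>
                            (\<forall>t\<in>N. card (classes_meeting G (bag t)) \<le> w)}"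

lemma tree_decomposition_single_bag:
  "finite_graph G \<Longrightarrow> tree_decomposition G {0} {} (\<lambda>_. verts G)"
  unfolding tree_decomposition_def is_tree_def connected_in_def
  using finite_graph_adjD[of G] by auto

lemma class_width_le:
  assumes "tree_decomposition G N E bag" "\<forall>t\<in>N. card (classes_meeting G (bag t)) \<le> w"
  shows "class_width G \<le> w"
  unfolding class_width_def using assms by (intro wellorder_Inf_le1) blast

lemma class_width_witness:
  assumes G: "finite_graph G"
  obtains N E bag where "tree_decomposition G N E bag"
    "\<forall>t\<in>N. card (classes_meeting G (bag t)) \<le> class_width G"
proof -
  have "card (verts G) \<in> {w. \<exists>N E bag. tree_decomposition G N E bag \<and>
      (\<forall>t\<in>N. card (classes_meeting G (bag t)) \<le> w)}"
    using tree_decomposition_single_bag[OF G] card_classes_meeting_le[of "verts G" G]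
      finite_graph_finite_verts[OF G] by blast
  from wellorder_InfI[OF this] show thesis using that unfolding class_width_def by blast
qed

lemma alpha_induced_le_card_classes_meeting:
  assumes G: "finite_graph G"
  shows "alpha (induced G B) \<le> card (classes_meeting G B)"
proof (rule alpha_induced_le[OF G])
  fix I assume I: "independent G I" "I \<subseteq> B"
  have "inj_on (eq_class G) I"
  proof (rule inj_onI, rule ccontr)
    fix x y assume xy: "x \<in> I" "y \<in> I" "eq_class G x = eq_class G y" "x \<noteq> y"
    hence "y \<in> eq_class G x" using I(1) self_in_eq_class[of y G] unfolding independent_def by auto
    hence "adj G x y" using clique_equiv_adj[OF G _ xy(4)] unfolding eq_class_def by simp
    thus False using I(1) xy(1,2) unfolding independent_def by blast
  qed
  moreover have "eq_class G ` I \<subseteq> classes_meeting G B"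
    using I eq_class_in_classes_meeting[of _ B G] unfolding independent_def by blast
  ultimately show "card I \<le> card (classes_meeting G B)"
    using card_inj_on_le[OF _ _ finite_classes_meeting[OF G]] by blast
qed

lemma alpha_treewidth_le_class_width:
  assumes G: "finite_graph G"
  shows "alpha_treewidth G \<le> class_width G"
proof -
  obtain N E bag where td: "tree_decomposition G N E bag"
    and w: "\<forall>t\<in>N. card (classes_meeting G (bag t)) \<le> class_width G"
    using class_width_witness[OF G] .
  hence "\<forall>t\<in>N. alpha (induced G (bag t)) \<le> class_width G"
    using alpha_induced_le_card_classes_meeting[OF G] le_trans by blast
  thus ?thesis unfolding alpha_treewidth_def using td by (intro wellorder_Inf_le1) blast
qed

lemma tree_decomposition_clique_quotient:
  assumes G: "finite_graph G" and td: "tree_decomposition G N E bag"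
  shows "tree_decomposition (clique_quotient G) N E (\<lambda>t. classes_meeting G (bag t))"
proof -
  have tdG: "is_tree N E" "\<forall>t\<in>N. bag t \<subseteq> verts G" "\<forall>v\<in>verts G. \<exists>t\<in>N. v \<in> bag t"
    "\<forall>u v. adj G u v \<longrightarrow> (\<exists>t\<in>N. u \<in> bag t \<and> v \<in> bag t)"
    "\<forall>v\<in>verts G. connected_in E {t \<in> N. v \<in> bag t}"
    using td unfolding tree_decomposition_def by auto
  text \<open>The nodes whose bag meets a class \<open>C\<close> are the union of the subtrees of its
    vertices, and all of these meet the subtree of one fixed vertex \<open>v0 \<in> C\<close>,
    because distinct vertices of a class are adjacent.\<close>
  have conn: "connected_in E {t \<in> N. C \<in> classes_meeting G (bag t)}" if C: "C \<in> eq_classes G" for C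
  proof -
    obtain v0 where v0: "v0 \<in> verts G" "C = eq_class G v0" using C unfolding eq_classes_def by auto
    have v0C: "v0 \<in> C" using self_in_eq_class[OF v0(1)] v0(2) by simp
    define S where "S v = {t \<in> N. v \<in> bag t}" for v
    have "{t \<in> N. C \<in> classes_meeting G (bag t)} = \<Union>(S ` C)"
      unfolding S_def classes_meeting_def using C by auto
    moreover have "S u \<inter> S v0 \<noteq> {}" if "u \<in> C" for u
    proof (cases "u = v0")
      case True thus ?thesis using tdG(3) v0(1) unfolding S_def by auto
    next
      case False
      have "adj G v0 u"
        using clique_equiv_adj[OF G _ False[symmetric]] that v0(2) unfolding eq_class_def by simp
      thus ?thesis using tdG(4) unfolding S_def by blast
    qed
    moreover have "connected_in E (S u)" if "u \<in> C" for u
      using tdG(5) eq_classes_subset_verts[OF C] that unfolding S_def by blast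
    ultimately show ?thesis
      using connected_in_Union[OF tree_sym[OF tdG(1)], of "S ` C" "S v0"] v0C by auto
  qed
  show ?thesis
    unfolding tree_decomposition_def verts_clique_quotient
  proof (intro conjI)
    show "\<forall>C\<in>eq_classes G. \<exists>t\<in>N. C \<in> classes_meeting G (bag t)"
    proof
      fix C assume C: "C \<in> eq_classes G"
      then obtain v where "v \<in> verts G" "C = eq_class G v" unfolding eq_classes_def by auto
      moreover from this obtain t where "t \<in> N" "v \<in> bag t" using tdG(3) by blast
      ultimately show "\<exists>t\<in>N. C \<in> classes_meeting G (bag t)"
        using eq_class_in_classes_meeting[of v "bag t" G] by blast
    qed
    show "\<forall>C D. adj (clique_quotient G) C D \<longrightarrow>
        (\<exists>t\<in>N. C \<in> classes_meeting G (bag t) \<and> D \<in> classes_meeting G (bag t))"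
    proof (intro allI impI)
      fix C D assume "adj (clique_quotient G) C D"
      then obtain u v where uv: "C \<in> eq_classes G" "D \<in> eq_classes G" "u \<in> C" "v \<in> D" "adj G u v"
        unfolding adj_clique_quotient by blast
      moreover obtain t where "t \<in> N" "u \<in> bag t" "v \<in> bag t" using tdG(4) uv(5) by blast
      ultimately show "\<exists>t\<in>N. C \<in> classes_meeting G (bag t) \<and> D \<in> classes_meeting G (bag t)"
        unfolding classes_meeting_def by blast
    qed
  qed (use tdG(1) conn in \<open>auto simp: classes_meeting_def\<close>)
qed

lemma treewidth_clique_quotient_le_class_width:
  assumes G: "finite_graph G"
  shows "treewidth (clique_quotient G) \<le> class_width G"
proof -
  obtain N E bag where "tree_decomposition G N E bag"
    and "\<forall>t\<in>N. card (classes_meeting G (bag t)) \<le> class_width G"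
    using class_width_witness[OF G] .
  thus ?thesis unfolding treewidth_def
    using tree_decomposition_clique_quotient[OF G] by (intro wellorder_Inf_le1) blast
qed

lemma tree_decomposition_from_clique_quotient:
  assumes G: "finite_graph G" and td: "tree_decomposition (clique_quotient G) N E bagQ"
  shows "tree_decomposition G N E (\<lambda>t. \<Union>(bagQ t))"
    and "\<And>t. t \<in> N \<Longrightarrow> classes_meeting G (\<Union>(bagQ t)) \<subseteq> bagQ t"
proof -
  have tdQ: "is_tree N E" "\<forall>t\<in>N. bagQ t \<subseteq> eq_classes G"
    "\<forall>C\<in>eq_classes G. \<exists>t\<in>N. C \<in> bagQ t"
    "\<forall>C D. adj (clique_quotient G) C D \<longrightarrow> (\<exists>t\<in>N. C \<in> bagQ t \<and> D \<in> bagQ t)"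
    "\<forall>C\<in>eq_classes G. connected_in E {t \<in> N. C \<in> bagQ t}"
    using td unfolding tree_decomposition_def verts_clique_quotient by auto
  have mem_bag: "v \<in> \<Union>(bagQ t) \<longleftrightarrow> eq_class G v \<in> bagQ t" if "t \<in> N" "v \<in> verts G" for t v
    using tdQ(2) that self_in_eq_class[of v G] eq_classes_eq_class[of _ G v] by blast
  show "tree_decomposition G N E (\<lambda>t. \<Union>(bagQ t))"
    unfolding tree_decomposition_def
  proof (intro conjI)
    show "\<forall>t\<in>N. \<Union>(bagQ t) \<subseteq> verts G" using tdQ(2) eq_classes_subset_verts[of _ G] by blast
    show "\<forall>v\<in>verts G. \<exists>t\<in>N. v \<in> \<Union>(bagQ t)"
      using tdQ(3) mem_bag eq_class_in_eq_classes[of _ G] by blast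
    show "\<forall>u v. adj G u v \<longrightarrow> (\<exists>t\<in>N. u \<in> \<Union>(bagQ t) \<and> v \<in> \<Union>(bagQ t))"
    proof (intro allI impI)
      fix u v assume uv: "adj G u v"
      hence V: "u \<in> verts G" "v \<in> verts G" using finite_graph_adjD[OF G] by auto
      have "\<exists>t\<in>N. eq_class G u \<in> bagQ t \<and> eq_class G v \<in> bagQ t"
      proof (cases "eq_class G u = eq_class G v")
        case True thus ?thesis using tdQ(3) eq_class_in_eq_classes[OF V(1)] by auto
      next
        case False
        hence "adj (clique_quotient G) (eq_class G u) (eq_class G v)"
          unfolding adj_clique_quotient
          using uv V eq_class_in_eq_classes[of _ G] self_in_eq_class[of _ G] by blast
        thus ?thesis using tdQ(4) by blast
      qed
      thus "\<exists>t\<in>N. u \<in> \<Union>(bagQ t) \<and> v \<in> \<Union>(bagQ t)" using mem_bag V by blast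
    qed
    show "\<forall>v\<in>verts G. connected_in E {t \<in> N. v \<in> \<Union>(bagQ t)}"
    proof
      fix v assume v: "v \<in> verts G"
      have "{t \<in> N. v \<in> \<Union>(bagQ t)} = {t \<in> N. eq_class G v \<in> bagQ t}" using mem_bag v by blast
      thus "connected_in E {t \<in> N. v \<in> \<Union>(bagQ t)}"
        using tdQ(5) eq_class_in_eq_classes[OF v] by simp
    qed
  qed (rule tdQ(1))
  show "classes_meeting G (\<Union>(bagQ t)) \<subseteq> bagQ t" if "t \<in> N" for t
    using tdQ(2) that eq_classes_disjoint[of _ G] unfolding classes_meeting_def by blast
qed

lemma class_width_le_treewidth_clique_quotient:
  assumes G: "finite_graph G"
  shows "class_width G \<le> treewidth (clique_quotient G)"
proof -
  let ?W = "{w. \<exists>N E bag. tree_decomposition (clique_quotient G) N E bag \<and> (\<forall>t\<in>N. card (bag t) \<le> w)}"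
  have "tree_decomposition (clique_quotient G) {0} {} (\<lambda>_. eq_classes G)"
    unfolding tree_decomposition_def is_tree_def connected_in_def
      verts_clique_quotient adj_clique_quotient by auto
  hence "card (eq_classes G) \<in> ?W" by blast
  from wellorder_InfI[OF this] obtain N E bagQ
    where td: "tree_decomposition (clique_quotient G) N E bagQ"
      and w: "\<forall>t\<in>N. card (bagQ t) \<le> treewidth (clique_quotient G)"
    unfolding treewidth_def by blast
  have "card (classes_meeting G (\<Union>(bagQ t))) \<le> card (bagQ t)" if "t \<in> N" for t
    using tree_decomposition_from_clique_quotient(2)[OF G td that] td that finite_eq_classes[OF G]
    unfolding tree_decomposition_def verts_clique_quotient by (meson card_mono finite_subset)
  thus ?thesis
    using class_width_le[OF tree_decomposition_from_clique_quotient(1)[OF G td]] w le_trans by blast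
qed

lemma alpha_treewidth_witness:
  assumes G: "finite_graph G"
  obtains N E bag where "tree_decomposition G N E bag"
    "\<forall>t\<in>N. alpha (induced G (bag t)) \<le> alpha_treewidth G"
proof -
  have "alpha (induced G (verts G)) \<le> card (verts G)"
    using alpha_induced_le[OF G] finite_graph_finite_verts[OF G]
    unfolding independent_def by (meson card_mono)
  hence "card (verts G) \<in> {w. \<exists>N E bag. tree_decomposition G N E bag \<and>
      (\<forall>t\<in>N. alpha (induced G (bag t)) \<le> w)}"
    using tree_decomposition_single_bag[OF G] by blast
  from wellorder_InfI[OF this] show thesis using that unfolding alpha_treewidth_def by blast
qed

lemma class_width_bounded_by_alpha_treewidth:
  obtains f :: "nat \<Rightarrow> nat" where
    "\<And>G :: 'a graph. finite_graph G \<Longrightarrow> omega_tilde G \<le> d \<Longrightarrow> class_width G \<le> f (alpha_treewidth G)"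
proof -
  have "\<forall>a. \<exists>B. \<forall>(G :: 'a graph) Y. finite_graph G \<longrightarrow> omega_tilde G \<le> d \<longrightarrow>
      (\<forall>I. independent G I \<longrightarrow> I \<subseteq> Y \<longrightarrow> card I \<le> a) \<longrightarrow> card (classes_meeting G Y) < B"
    by (metis classes_meeting_ramsey_bound)
  then obtain f where f: "\<And>a (G :: 'a graph) Y. finite_graph G \<Longrightarrow> omega_tilde G \<le> d \<Longrightarrow>
      (\<And>I. independent G I \<Longrightarrow> I \<subseteq> Y \<Longrightarrow> card I \<le> a) \<Longrightarrow> card (classes_meeting G Y) < f a"
    by metis
  have "class_width G \<le> f (alpha_treewidth G)" if G: "finite_graph G" and om: "omega_tilde G \<le> d"
    for G :: "'a graph"
  proof -
    obtain N E bag where td: "tree_decomposition G N E bag"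
      and a: "\<forall>t\<in>N. alpha (induced G (bag t)) \<le> alpha_treewidth G"
      using alpha_treewidth_witness[OF G] .
    have "card (classes_meeting G (bag t)) \<le> f (alpha_treewidth G)" if "t \<in> N" for t
      using f[OF G om, of "bag t" "alpha_treewidth G"] card_le_alpha_induced[OF G] a that
      by (meson le_trans less_imp_le)
    thus ?thesis using class_width_le[OF td] by blast
  qed
  thus thesis using that by blast
qed

section \<open>From rank-decompositions to tree-decompositions\<close>

definition leaf_side :: "nat set \<Rightarrow> (nat \<times> nat) set \<Rightarrow> (nat \<Rightarrow> 'a) \<Rightarrow> nat \<Rightarrow> nat \<Rightarrow> 'a set" where
  "leaf_side N E f s t = f ` (tree_leaves N E \<inter> tree_side N E s t)"

definition cut_boundary ::
  "'a graph \<Rightarrow> nat set \<Rightarrow> (nat \<times> nat) set \<Rightarrow> (nat \<Rightarrow> 'a) \<Rightarrow> nat \<Rightarrow> nat \<Rightarrow> 'a set" where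
  "cut_boundary G N E f t s = {v \<in> verts G. \<exists>w. adj G v w \<and>
     (v \<in> leaf_side N E f t s \<and> w \<in> leaf_side N E f s t \<or> v \<in> leaf_side N E f s t \<and> w \<in> leaf_side N E f t s)}"

definition boundary_bag ::
  "'a graph \<Rightarrow> nat set \<Rightarrow> (nat \<times> nat) set \<Rightarrow> (nat \<Rightarrow> 'a) \<Rightarrow> nat \<Rightarrow> 'a set" where
  "boundary_bag G N E f t = (if t \<in> tree_leaves N E then {f t} else {})
     \<union> (\<Union>s\<in>{s. (t, s) \<in> E}. cut_boundary G N E f t s)"

lemma cut_boundary_sym: "cut_boundary G N E f t s = cut_boundary G N E f s t"
  unfolding cut_boundary_def by auto

lemma tree_leaves_subset: "tree_leaves N E \<subseteq> N"
  unfolding tree_leaves_def by auto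

context
  fixes G :: "'a graph" and N E f
  assumes G: "finite_graph G" and rd: "rank_decomposition G N E f"
begin

lemma rd_tree: "is_tree N E"
  using rd unfolding rank_decomposition_def by auto

lemma rd_bij: "bij_betw f (tree_leaves N E) (verts G)"
  using rd unfolding rank_decomposition_def by auto

definition leaf_of :: "'a \<Rightarrow> nat" where
  "leaf_of v = inv_into (tree_leaves N E) f v"

lemma leaf_of: "v \<in> verts G \<Longrightarrow> leaf_of v \<in> tree_leaves N E \<and> f (leaf_of v) = v"
  unfolding leaf_of_def using rd_bij
  by (metis bij_betw_imp_surj_on f_inv_into_f inv_into_into)

lemma leaf_of_label: "t \<in> tree_leaves N E \<Longrightarrow> leaf_of (f t) = t"
  unfolding leaf_of_def using bij_betw_inv_into_left[OF rd_bij] by simp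

lemma label_in_verts: "t \<in> tree_leaves N E \<Longrightarrow> f t \<in> verts G"
  using bij_betwE[OF rd_bij] by simp

lemma leaf_side_subset: "leaf_side N E f s t \<subseteq> verts G"
  unfolding leaf_side_def using label_in_verts by auto

lemma mem_leaf_side: "v \<in> verts G \<Longrightarrow> v \<in> leaf_side N E f s t \<longleftrightarrow> leaf_of v \<in> tree_side N E s t"
  unfolding leaf_side_def using leaf_of leaf_of_label by (metis IntD1 IntD2 IntI image_iff)

lemma leaf_side_compl: "(s, t) \<in> E \<Longrightarrow> verts G - leaf_side N E f s t = leaf_side N E f t s"
  using mem_leaf_side leaf_side_subset tree_side_compl[OF rd_tree] tree_side_subset[OF rd_tree]
    leaf_of tree_leaves_subset by blast

lemma leaf_unique_nbr:
  assumes t: "t \<in> tree_leaves N E" and "(t, s) \<in> E" "(t, s') \<in> E"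
  shows "s = s'"
proof (rule ccontr)
  assume "s \<noteq> s'"
  hence "card {s, s'} \<le> card {u. (t, u) \<in> E}"
    using assms(2,3) finite_tree_nbrs[OF rd_tree] by (intro card_mono) auto
  thus False using t \<open>s \<noteq> s'\<close> unfolding tree_leaves_def tree_degree_def by simp
qed

lemma boundary_bag_edge:
  assumes uv: "adj G u v"
  shows "\<exists>t\<in>N. u \<in> boundary_bag G N E f t \<and> v \<in> boundary_bag G N E f t"
proof -
  have V: "u \<in> verts G" "v \<in> verts G" using finite_graph_adjD[OF G uv] by auto
  define x where "x = leaf_of u"
  have x: "x \<in> tree_leaves N E" "x \<in> N" using leaf_of[OF V(1)] tree_leaves_subset unfolding x_def by auto
  have y: "leaf_of v \<in> N" using leaf_of[OF V(2)] tree_leaves_subset by auto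
  have "x \<noteq> leaf_of v" using leaf_of V uv finite_graph_not_adj_self[OF G] unfolding x_def by metis
  then obtain s where s: "(x, s) \<in> E" using rtrancl_first_edge[OF tree_connected[OF rd_tree x(2) y]] by metis
  text \<open>A leaf has a single neighbour, so its side of its only edge is just itself.\<close>
  have "leaf_of v \<notin> tree_side N E x s"
  proof
    assume "leaf_of v \<in> tree_side N E x s"
    hence "(x, leaf_of v) \<in> (E - uedge x s)\<^sup>*" using tree_side_iff[OF rd_tree x(2)] by auto
    then obtain s' where "(x, s') \<in> E - uedge x s"
      using rtrancl_first_edge \<open>x \<noteq> leaf_of v\<close> by metis
    thus False using leaf_unique_nbr[OF x(1) s] by auto
  qed
  hence "v \<in> leaf_side N E f s x" using tree_side_cover[OF rd_tree s y] mem_leaf_side[OF V(2)] by auto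
  moreover have "u \<in> leaf_side N E f x s"
    using mem_leaf_side[OF V(1)] tree_side_self[OF rd_tree x(2)] unfolding x_def by simp
  ultimately have "u \<in> cut_boundary G N E f x s" "v \<in> cut_boundary G N E f x s"
    unfolding cut_boundary_def using V uv finite_graph_adj_sym[OF G uv] by blast+
  thus ?thesis unfolding boundary_bag_def using s x(2) by blast
qed

text \<open>Walking from a node \<open>t\<close> whose cut separates \<open>v\<close> from a neighbour \<open>w\<close> towards the
  leaf of \<open>v\<close>, every node passed keeps \<open>w\<close> on its far side, so \<open>v\<close> stays in the bags.\<close>
lemma boundary_bag_path_to_leaf:
  assumes "(t, s) \<in> E" "v \<in> cut_boundary G N E f t s" "leaf_of v \<in> tree_side N E t s"
  shows "(t, leaf_of v) \<in> (E \<inter> {t \<in> N. v \<in> boundary_bag G N E f t} \<times> {t \<in> N. v \<in> boundary_bag G N E f t})\<^sup>*"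
  using assms
proof (induction "card (tree_side N E t s)" arbitrary: t s rule: less_induct)
  case less
  let ?B = "{t \<in> N. v \<in> boundary_bag G N E f t}"
  have tN: "t \<in> N" and vV: "v \<in> verts G"
    using tree_edgeD[OF rd_tree less.prems(1)] less.prems(2) unfolding cut_boundary_def by auto
  show ?case
  proof (cases "t = leaf_of v")
    case False
    have "v \<in> leaf_side N E f t s" using mem_leaf_side[OF vV] less.prems(3) by simp
    then obtain w where w: "adj G v w" "w \<in> leaf_side N E f s t"
      using less.prems(2) leaf_side_compl[OF less.prems(1)] unfolding cut_boundary_def by blast
    have wV: "w \<in> verts G" using finite_graph_adjD[OF G w(1)] by simp
    obtain t' where t': "(t, t') \<in> E" "t' \<noteq> s" "leaf_of v \<in> tree_side N E t' t"
      using tree_side_child[OF rd_tree tN less.prems(3)] False by metis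
    have "tree_side N E s t \<subseteq> tree_side N E t t'"
      using tree_side_child_subset[OF rd_tree less.prems(1) t'(2)[symmetric]] by blast
    hence "w \<in> leaf_side N E f t t'" using w(2) mem_leaf_side[OF wV] by auto
    moreover have "v \<in> leaf_side N E f t' t" using mem_leaf_side[OF vV] t'(3) by simp
    ultimately have vb: "v \<in> cut_boundary G N E f t' t" unfolding cut_boundary_def using vV w(1) by blast
    have "tree_side N E t' t \<subset> tree_side N E t s"
      using tree_side_child_subset[OF rd_tree t'(1,2)] tree_side_self[OF rd_tree tN] by blast
    hence "card (tree_side N E t' t) < card (tree_side N E t s)"
      using tree_finite[OF rd_tree] tree_side_subset[OF rd_tree] by (meson psubset_card_mono rev_finite_subset)
    hence "(t', leaf_of v) \<in> (E \<inter> ?B \<times> ?B)\<^sup>*"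
      using less.hyps tree_edge_sym[OF rd_tree t'(1)] vb t'(3) by blast
    moreover have "t \<in> ?B" "t' \<in> ?B"
      using tN tree_edgeD[OF rd_tree t'(1)] less.prems(1,2) vb tree_edge_sym[OF rd_tree t'(1)]
      unfolding boundary_bag_def by blast+
    ultimately show ?thesis using t'(1) by (meson IntI SigmaI converse_rtrancl_into_rtrancl)
  qed simp
qed

lemma boundary_bag_connected:
  assumes vV: "v \<in> verts G"
  shows "connected_in E {t \<in> N. v \<in> boundary_bag G N E f t}"
proof -
  define B where "B = {t \<in> N. v \<in> boundary_bag G N E f t}"
  have to_leaf: "(t, leaf_of v) \<in> (E \<inter> B \<times> B)\<^sup>*" if "t \<in> B" for t
  proof -
    have tN: "t \<in> N" and vt: "v \<in> boundary_bag G N E f t" using that unfolding B_def by auto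
    consider "t \<in> tree_leaves N E" "v = f t" | s where "(t, s) \<in> E" "v \<in> cut_boundary G N E f t s"
      using vt unfolding boundary_bag_def by (auto split: if_splits)
    thus ?thesis
    proof cases
      case 1 thus ?thesis using leaf_of_label by simp
    next
      case (2 s)
      have "leaf_of v \<in> N" using leaf_of[OF vV] tree_leaves_subset by auto
      hence "leaf_of v \<in> tree_side N E t s \<or> leaf_of v \<in> tree_side N E s t"
        using tree_side_cover[OF rd_tree 2(1)] by simp
      thus ?thesis
      proof
        assume "leaf_of v \<in> tree_side N E t s"
        thus ?thesis using boundary_bag_path_to_leaf 2 unfolding B_def by blast
      next
        assume l: "leaf_of v \<in> tree_side N E s t"
        have e': "(s, t) \<in> E" using tree_edge_sym[OF rd_tree 2(1)] .
        have vb': "v \<in> cut_boundary G N E f s t" using 2(2) cut_boundary_sym[of G N E f t s] by simp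
        have "(s, leaf_of v) \<in> (E \<inter> B \<times> B)\<^sup>*"
          using boundary_bag_path_to_leaf[OF e' vb' l] unfolding B_def .
        moreover have "s \<in> B" unfolding B_def boundary_bag_def using tree_edgeD[OF rd_tree e'] e' vb' by blast
        ultimately show ?thesis using that 2(1) by (meson IntI SigmaI converse_rtrancl_into_rtrancl)
      qed
    qed
  qed
  have sym: "sym (E \<inter> B \<times> B)" using tree_sym[OF rd_tree] unfolding sym_def by auto
  show ?thesis unfolding connected_in_def B_def[symmetric]
  proof (intro ballI)
    fix x y assume "x \<in> B" "y \<in> B"
    hence "(x, leaf_of v) \<in> (E \<inter> B \<times> B)\<^sup>*" "(leaf_of v, y) \<in> (E \<inter> B \<times> B)\<^sup>*"
      using to_leaf rtrancl_sym_flip[OF sym] by blast+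
    thus "(x, y) \<in> (E \<inter> B \<times> B)\<^sup>*" by (rule rtrancl_trans)
  qed
qed

lemma rank_decomposition_tree_decomposition: "tree_decomposition G N E (boundary_bag G N E f)"
  unfolding tree_decomposition_def
proof (intro conjI)
  show "\<forall>t\<in>N. boundary_bag G N E f t \<subseteq> verts G"
    unfolding boundary_bag_def cut_boundary_def using label_in_verts by auto
  show "\<forall>v\<in>verts G. \<exists>t\<in>N. v \<in> boundary_bag G N E f t"
  proof
    fix v assume "v \<in> verts G"
    hence "leaf_of v \<in> N" "v \<in> boundary_bag G N E f (leaf_of v)"
      using leaf_of[of v] tree_leaves_subset unfolding boundary_bag_def by auto
    thus "\<exists>t\<in>N. v \<in> boundary_bag G N E f t" by blast
  qed
  show "\<forall>u v. adj G u v \<longrightarrow> (\<exists>t\<in>N. u \<in> boundary_bag G N E f t \<and> v \<in> boundary_bag G N E f t)"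
    using boundary_bag_edge by blast
  show "\<forall>v\<in>verts G. connected_in E {t \<in> N. v \<in> boundary_bag G N E f t}"
    using boundary_bag_connected by blast
qed (rule rd_tree)

lemma card_classes_meeting_cut_boundary:
  assumes e: "(t, s) \<in> E"
    and k: "\<forall>(s, t)\<in>E. cutrank G (leaf_side N E f s t) \<le> k"
    and M: "\<And>b. card (classes_meeting G {u. adj G b u}) \<le> M"
  shows "card (classes_meeting G (cut_boundary G N E f t s)) \<le> 2 * (2 ^ k * M)"
proof -
  have e': "(s, t) \<in> E" using tree_edge_sym[OF rd_tree e] .
  define D where "D Z = {a \<in> Z \<inter> verts G. \<exists>y\<in>verts G - Z. adj G a y}" for Z
  have "cut_boundary G N E f t s \<subseteq> D (leaf_side N E f t s) \<union> D (leaf_side N E f s t)"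
    unfolding cut_boundary_def D_def using leaf_side_compl[OF e] leaf_side_compl[OF e'] by blast
  hence "classes_meeting G (cut_boundary G N E f t s)
      \<subseteq> classes_meeting G (D (leaf_side N E f t s)) \<union> classes_meeting G (D (leaf_side N E f s t))"
    unfolding classes_meeting_def by blast
  hence "card (classes_meeting G (cut_boundary G N E f t s))
      \<le> card (classes_meeting G (D (leaf_side N E f t s)) \<union> classes_meeting G (D (leaf_side N E f s t)))"
    by (intro card_mono) (simp_all add: finite_classes_meeting[OF G])
  also have "\<dots> \<le> card (classes_meeting G (D (leaf_side N E f t s)))
      + card (classes_meeting G (D (leaf_side N E f s t)))" by (rule card_Un_le)
  also have "\<dots> \<le> 2 ^ k * M + 2 ^ k * M"
    using card_classes_meeting_boundary_le[OF G _ M] k e e' unfolding D_def by (intro add_mono) auto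
  finally show ?thesis by simp
qed

lemma card_classes_meeting_boundary_bag:
  assumes k: "\<forall>(s, t)\<in>E. cutrank G (leaf_side N E f s t) \<le> k"
    and M: "\<And>b. card (classes_meeting G {u. adj G b u}) \<le> M" and tN: "t \<in> N"
  shows "card (classes_meeting G (boundary_bag G N E f t)) \<le> 1 + 3 * (2 * (2 ^ k * M))"
proof -
  define nb where "nb = {s. (t, s) \<in> E}"
  have finnb: "finite nb" unfolding nb_def by (rule finite_tree_nbrs[OF rd_tree])
  have "tree_degree E t \<le> 3"
  proof (cases "t \<in> tree_leaves N E")
    case False thus ?thesis using rd tN unfolding rank_decomposition_def by simp
  qed (simp add: tree_leaves_def)
  hence "card nb \<le> 3" unfolding nb_def tree_degree_def .
  let ?own = "if t \<in> tree_leaves N E then {f t} else {}"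
  have "classes_meeting G (boundary_bag G N E f t)
      = classes_meeting G ?own \<union> (\<Union>s\<in>nb. classes_meeting G (cut_boundary G N E f t s))"
    unfolding boundary_bag_def nb_def by (simp only: classes_meeting_Un classes_meeting_UN)
  hence "card (classes_meeting G (boundary_bag G N E f t))
      \<le> card (classes_meeting G ?own) + card (\<Union>s\<in>nb. classes_meeting G (cut_boundary G N E f t s))"
    by (simp add: card_Un_le)
  also have "\<dots> \<le> 1 + (\<Sum>s\<in>nb. card (classes_meeting G (cut_boundary G N E f t s)))"
    using card_classes_meeting_le[of ?own G] card_UN_le[OF finnb] by (intro add_mono) auto
  also have "\<dots> \<le> 1 + (\<Sum>s\<in>nb. 2 * (2 ^ k * M))"
    using card_classes_meeting_cut_boundary[OF _ k M] unfolding nb_def by (intro add_mono sum_mono) auto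
  also have "\<dots> \<le> 1 + 3 * (2 * (2 ^ k * M))" using \<open>card nb \<le> 3\<close> by simp
  finally show ?thesis .
qed

end

section \<open>Binary trees as rank-decompositions\<close>

text \<open>In the heap numbering of a binary tree node \<open>m\<close> has children \<open>2 * m\<close> and
  \<open>2 * m + 1\<close>, so \<open>heap_desc m k\<close> says that node \<open>k\<close> lies in the subtree of \<open>m\<close>.\<close>
definition heap_desc :: "nat \<Rightarrow> nat \<Rightarrow> bool" where
  "heap_desc m k \<longleftrightarrow> (\<exists>i. k div 2 ^ i = m)"

lemma heap_desc_refl: "heap_desc m m"
  unfolding heap_desc_def by (intro exI[of _ 0]) simp

lemma div_pow_Suc: "(k::nat) div 2 ^ Suc i = (k div 2) div 2 ^ i"
  by (simp add: div_mult2_eq)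

lemma heap_desc_child:
  "heap_desc m k \<Longrightarrow> heap_desc m (2 * k)" "heap_desc m k \<Longrightarrow> heap_desc m (2 * k + 1)"
proof -
  assume "heap_desc m k"
  then obtain i where i: "k div 2 ^ i = m" unfolding heap_desc_def by auto
  have "(2 * k) div 2 ^ Suc i = m" using i by (simp only: div_pow_Suc) simp
  thus "heap_desc m (2 * k)" unfolding heap_desc_def by blast
  have "(2 * k + 1) div 2 ^ Suc i = m" using i by (simp only: div_pow_Suc) simp
  thus "heap_desc m (2 * k + 1)" unfolding heap_desc_def by blast
qed

lemma heap_desc_parent: "heap_desc m k \<Longrightarrow> k \<noteq> m \<Longrightarrow> heap_desc m (k div 2)"
proof -
  assume "heap_desc m k" "k \<noteq> m"
  then obtain i where i: "k div 2 ^ i = m" unfolding heap_desc_def by auto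
  with \<open>k \<noteq> m\<close> obtain j where "i = Suc j" by (cases i) auto
  hence "(k div 2) div 2 ^ j = m" using i by (simp only: div_pow_Suc)
  thus ?thesis unfolding heap_desc_def by blast
qed

lemma heap_desc_le: "heap_desc m k \<Longrightarrow> m \<le> k"
proof -
  assume "heap_desc m k"
  then obtain i where "k div 2 ^ i = m" unfolding heap_desc_def by auto
  thus ?thesis using div_le_dividend[of k "2 ^ i"] by simp
qed

lemma heap_desc_le_double: "heap_desc m k \<Longrightarrow> k \<noteq> m \<Longrightarrow> 2 * m \<le> k"
proof -
  assume "heap_desc m k" "k \<noteq> m"
  hence "heap_desc m (k div 2)" by (rule heap_desc_parent)
  hence "m \<le> k div 2" by (rule heap_desc_le)
  thus ?thesis by simp
qed

lemma heap_desc_trans: "heap_desc a b \<Longrightarrow> heap_desc b c \<Longrightarrow> heap_desc a c"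
proof -
  assume "heap_desc a b" "heap_desc b c"
  then obtain i j where i: "b div 2 ^ i = a" and j: "c div 2 ^ j = b" unfolding heap_desc_def by auto
  have "c div 2 ^ (j + i) = a" using i j by (simp add: power_add div_mult2_eq)
  thus ?thesis unfolding heap_desc_def by blast
qed

lemma heap_desc_left: "heap_desc (2 * m) k \<Longrightarrow> heap_desc m k"
  and heap_desc_right: "heap_desc (2 * m + 1) k \<Longrightarrow> heap_desc m k"
  using heap_desc_trans[OF heap_desc_child(1)[OF heap_desc_refl]]
    heap_desc_trans[OF heap_desc_child(2)[OF heap_desc_refl]] by blast+

lemma div_pow_le_half: "d \<ge> 1 \<Longrightarrow> (a::nat) div 2 ^ d \<le> a div 2"
proof -
  assume "d \<ge> 1"
  hence "(2::nat) ^ 1 \<le> 2 ^ d" by (intro power_increasing) auto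
  hence "(2::nat) \<le> 2 ^ d" by simp
  thus ?thesis by (rule div_le_mono2[rotated]) simp
qed

lemma heap_desc_siblings_disjoint:
  "m \<ge> 1 \<Longrightarrow> heap_desc (2 * m) k \<Longrightarrow> heap_desc (2 * m + 1) k \<Longrightarrow> False"
proof -
  assume m: "m \<ge> 1" and a: "heap_desc (2 * m) k" "heap_desc (2 * m + 1) k"
  obtain i j where i: "k div 2 ^ i = 2 * m" and j: "k div 2 ^ j = 2 * m + 1" using a unfolding heap_desc_def by auto
  consider "i = j" | "i < j" | "j < i" by linarith
  thus False
  proof cases
    case 1 thus False using i j by simp
  next
    case 2
    define d where "d = j - i"
    have d: "j = i + d" "d \<ge> 1" using 2 unfolding d_def by auto
    have "k div 2 ^ j = (k div 2 ^ i) div 2 ^ d" using d(1) by (simp add: power_add div_mult2_eq)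
    also have "\<dots> \<le> (2 * m) div 2" using i div_pow_le_half[OF d(2), of "2 * m"] by simp
    finally show False using j by simp
  next
    case 3
    define d where "d = i - j"
    have d: "i = j + d" "d \<ge> 1" using 3 unfolding d_def by auto
    have "k div 2 ^ i = (k div 2 ^ j) div 2 ^ d" using d(1) by (simp add: power_add div_mult2_eq)
    also have "\<dots> \<le> (2 * m + 1) div 2" using j div_pow_le_half[OF d(2), of "2 * m + 1"] by simp
    finally show False using i m by simp
  qed
qed

datatype 'a btree = Leaf 'a | Node "'a btree" "'a btree"

primrec labels :: "'a btree \<Rightarrow> 'a set" where
  "labels (Leaf a) = {a}"
| "labels (Node l r) = labels l \<union> labels r"

primrec distinct_labels :: "'a btree \<Rightarrow> bool" where
  "distinct_labels (Leaf a) = True"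
| "distinct_labels (Node l r) \<longleftrightarrow> distinct_labels l \<and> distinct_labels r \<and> labels l \<inter> labels r = {}"

primrec clusters :: "'a btree \<Rightarrow> 'a set set" where
  "clusters (Leaf a) = {{a}}"
| "clusters (Node l r) = insert (labels l \<union> labels r) (clusters l \<union> clusters r)"

primrec heap_nodes :: "'a btree \<Rightarrow> nat \<Rightarrow> nat set" where
  "heap_nodes (Leaf a) m = {m}"
| "heap_nodes (Node l r) m = insert m (heap_nodes l (2 * m) \<union> heap_nodes r (2 * m + 1))"

primrec heap_leaves :: "'a btree \<Rightarrow> nat \<Rightarrow> nat set" where
  "heap_leaves (Leaf a) m = {m}"
| "heap_leaves (Node l r) m = heap_leaves l (2 * m) \<union> heap_leaves r (2 * m + 1)"

primrec heap_label :: "'a btree \<Rightarrow> nat \<Rightarrow> nat \<Rightarrow> 'a" where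
  "heap_label (Leaf a) m k = a"
| "heap_label (Node l r) m k =
    (if heap_desc (2 * m) k then heap_label l (2 * m) k else heap_label r (2 * m + 1) k)"

declare heap_label.simps(2)[simp del]

lemma heap_nodes_desc: "k \<in> heap_nodes T m \<Longrightarrow> heap_desc m k"
proof (induction T arbitrary: m)
  case (Leaf a) thus ?case by (simp add: heap_desc_refl)
next
  case (Node l r)
  from Node.prems consider "k = m" | "k \<in> heap_nodes l (2 * m)" | "k \<in> heap_nodes r (2 * m + 1)"
    by auto
  thus ?case
    by cases (auto simp: heap_desc_refl intro: heap_desc_left[OF Node.IH(1)] heap_desc_right[OF Node.IH(2)])
qed

lemma heap_root_in_nodes: "m \<in> heap_nodes T m"
  by (cases T) auto

lemma heap_leaves_subset_nodes: "heap_leaves T m \<subseteq> heap_nodes T m"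
  by (induction T arbitrary: m) auto

lemma finite_heap_nodes: "finite (heap_nodes T m)"
  by (induction T arbitrary: m) auto

lemma not_heap_desc_children_root:
  "m \<ge> 1 \<Longrightarrow> \<not> heap_desc (2 * m) m" "m \<ge> 1 \<Longrightarrow> \<not> heap_desc (2 * m + 1) m"
  using heap_desc_le by fastforce+

lemma heap_nodes_parent: "m \<ge> 1 \<Longrightarrow> k \<in> heap_nodes T m \<Longrightarrow> k \<noteq> m \<Longrightarrow> k div 2 \<in> heap_nodes T m"
proof (induction T arbitrary: m)
  case (Leaf a) thus ?case by simp
next
  case (Node l r)
  have m2: "2 * m \<ge> 1" "2 * m + 1 \<ge> 1" using Node.prems(1) by auto
  from Node.prems(2,3) have "k \<in> heap_nodes l (2 * m) \<or> k \<in> heap_nodes r (2 * m + 1)" by simp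
  thus ?case
  proof
    assume k: "k \<in> heap_nodes l (2 * m)"
    show ?thesis
    proof (cases "k = 2 * m")
      case True thus ?thesis by simp
    next
      case False thus ?thesis using Node.IH(1)[OF m2(1) k] by simp
    qed
  next
    assume k: "k \<in> heap_nodes r (2 * m + 1)"
    show ?thesis
    proof (cases "k = 2 * m + 1")
      case True thus ?thesis by simp
    next
      case False thus ?thesis using Node.IH(2)[OF m2(2) k] by simp
    qed
  qed
qed

lemma heap_leaves_desc: "k \<in> heap_leaves T m \<Longrightarrow> heap_desc m k"
  using heap_nodes_desc heap_leaves_subset_nodes by blast

lemma root_not_in_heap_leaves: "m \<ge> 1 \<Longrightarrow> m \<notin> heap_leaves (Node l r) m"
  using heap_leaves_desc not_heap_desc_children_root by fastforce

lemma heap_nodes_children: "m \<ge> 1 \<Longrightarrow> k \<in> heap_nodes T m \<Longrightarrow>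
   (2 * k \<in> heap_nodes T m \<longleftrightarrow> k \<notin> heap_leaves T m) \<and> (2 * k + 1 \<in> heap_nodes T m \<longleftrightarrow> k \<notin> heap_leaves T m)"
proof (induction T arbitrary: m)
  case (Leaf a)
  thus ?case by simp
next
  case (Node l r)
  have m2: "2 * m \<ge> 1" "2 * m + 1 \<ge> 1" using Node.prems(1) by auto
  have km: "k \<ge> m" using heap_nodes_desc[OF Node.prems(2)] heap_desc_le by auto
  consider "k = m" | "k \<in> heap_nodes l (2 * m)" | "k \<in> heap_nodes r (2 * m + 1)" using Node.prems(2) by auto
  thus ?case
  proof cases
    case 1
    thus ?thesis using root_not_in_heap_leaves[OF Node.prems(1)] heap_root_in_nodes by auto
  next
    case 2
    have dk: "heap_desc (2 * m) k" using heap_nodes_desc[OF 2] .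
    have d1: "heap_desc (2 * m) (2 * k)" "heap_desc (2 * m) (2 * k + 1)" using heap_desc_child[OF dk] by auto
    have n1: "2 * k \<noteq> m" "2 * k + 1 \<noteq> m" using km Node.prems(1) by auto
    have n2: "2 * k \<notin> heap_nodes r (2 * m + 1)" "2 * k + 1 \<notin> heap_nodes r (2 * m + 1)"
      using d1 heap_nodes_desc heap_desc_siblings_disjoint[OF Node.prems(1)] by blast+
    have n3: "k \<notin> heap_leaves r (2 * m + 1)" using dk heap_leaves_desc heap_desc_siblings_disjoint[OF Node.prems(1)] by blast
    show ?thesis using Node.IH(1)[OF m2(1) 2] n1 n2 n3 by auto
  next
    case 3
    have dk: "heap_desc (2 * m + 1) k" using heap_nodes_desc[OF 3] .
    have d1: "heap_desc (2 * m + 1) (2 * k)" "heap_desc (2 * m + 1) (2 * k + 1)" using heap_desc_child[OF dk] by auto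
    have n1: "2 * k \<noteq> m" "2 * k + 1 \<noteq> m" using km Node.prems(1) by auto
    have n2: "2 * k \<notin> heap_nodes l (2 * m)" "2 * k + 1 \<notin> heap_nodes l (2 * m)"
      using d1 heap_nodes_desc heap_desc_siblings_disjoint[OF Node.prems(1)] by blast+
    have n3: "k \<notin> heap_leaves l (2 * m)" using dk heap_leaves_desc heap_desc_siblings_disjoint[OF Node.prems(1)] by blast
    show ?thesis using Node.IH(2)[OF m2(2) 3] n1 n2 n3 by auto
  qed
qed

lemma heap_label_Node_left:
  "k \<in> heap_leaves l (2 * m) \<Longrightarrow> heap_label (Node l r) m k = heap_label l (2 * m) k"
  using heap_leaves_desc[of k l "2 * m"] by (simp add: heap_label.simps)

lemma heap_label_Node_right:
  "m \<ge> 1 \<Longrightarrow> k \<in> heap_leaves r (2 * m + 1) \<Longrightarrow> heap_label (Node l r) m k = heap_label r (2 * m + 1) k"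
  using heap_leaves_desc[of k r "2 * m + 1"] heap_desc_siblings_disjoint[of m k]
  by (auto simp: heap_label.simps)

lemma heap_label_image: "m \<ge> 1 \<Longrightarrow> heap_label T m ` heap_leaves T m = labels T"
proof (induction T arbitrary: m)
  case (Node l r)
  have "heap_label (Node l r) m ` heap_leaves l (2 * m) = heap_label l (2 * m) ` heap_leaves l (2 * m)"
    "heap_label (Node l r) m ` heap_leaves r (2 * m + 1) = heap_label r (2 * m + 1) ` heap_leaves r (2 * m + 1)"
    by (rule image_cong[OF refl heap_label_Node_left], assumption)
      (rule image_cong[OF refl heap_label_Node_right[OF Node.prems]], assumption)
  hence "heap_label (Node l r) m ` heap_leaves (Node l r) m
      = heap_label l (2 * m) ` heap_leaves l (2 * m) \<union> heap_label r (2 * m + 1) ` heap_leaves r (2 * m + 1)"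
    by (simp add: heap_leaves.simps image_Un)
  thus ?case using Node.IH[of "2 * m"] Node.IH[of "2 * m + 1"] Node.prems by simp
qed simp

lemma heap_label_inj: "m \<ge> 1 \<Longrightarrow> distinct_labels T \<Longrightarrow> inj_on (heap_label T m) (heap_leaves T m)"
proof (induction T arbitrary: m)
  case (Node l r)
  have il: "inj_on (heap_label l (2 * m)) (heap_leaves l (2 * m))"
    and ir: "inj_on (heap_label r (2 * m + 1)) (heap_leaves r (2 * m + 1))"
    using Node by simp_all
  have iL: "heap_label l (2 * m) k \<in> labels l" if "k \<in> heap_leaves l (2 * m)" for k
    using heap_label_image[of "2 * m" l] Node.prems(1) that by auto
  have iR: "heap_label r (2 * m + 1) k \<in> labels r" if "k \<in> heap_leaves r (2 * m + 1)" for k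
    using heap_label_image[of "2 * m + 1" r] that by auto
  have disj: "labels l \<inter> labels r = {}" using Node.prems(2) by simp
  note L = heap_label_Node_left[of _ l m r] and R = heap_label_Node_right[OF Node.prems(1), of _ r l]
  show ?case
  proof (rule inj_onI)
    fix x y assume "x \<in> heap_leaves (Node l r) m" "y \<in> heap_leaves (Node l r) m"
      and e: "heap_label (Node l r) m x = heap_label (Node l r) m y"
    then consider "x \<in> heap_leaves l (2 * m)" "y \<in> heap_leaves l (2 * m)"
      | "x \<in> heap_leaves l (2 * m)" "y \<in> heap_leaves r (2 * m + 1)"
      | "x \<in> heap_leaves r (2 * m + 1)" "y \<in> heap_leaves l (2 * m)"
      | "x \<in> heap_leaves r (2 * m + 1)" "y \<in> heap_leaves r (2 * m + 1)"
      by (auto simp: heap_leaves.simps)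
    thus "x = y"
    proof cases
      case 1 thus ?thesis using e L il inj_onD by metis
    next
      case 2 thus ?thesis using e L R iL iR disj by (metis disjoint_iff)
    next
      case 3 thus ?thesis using e L R iL iR disj by (metis disjoint_iff)
    next
      case 4 thus ?thesis using e R ir inj_onD by metis
    qed
  qed
qed simp

lemma heap_label_subtree_cluster:
  "m \<ge> 1 \<Longrightarrow> k \<in> heap_nodes T m \<Longrightarrow> heap_label T m ` (heap_leaves T m \<inter> {u. heap_desc k u}) \<in> clusters T"
proof (induction T arbitrary: m)
  case (Leaf a)
  hence "heap_leaves (Leaf a) m \<inter> {u. heap_desc k u} = {m}" using heap_desc_refl by auto
  thus ?case by simp
next
  case (Node l r)
  have m2: "2 * m \<ge> 1" "2 * m + 1 \<ge> 1" using Node.prems(1) by auto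
  consider "k = m" | "k \<in> heap_nodes l (2 * m)" | "k \<in> heap_nodes r (2 * m + 1)" using Node.prems(2) by auto
  thus ?case
  proof cases
    case 1
    have "heap_leaves (Node l r) m \<inter> {u. heap_desc k u} = heap_leaves (Node l r) m" using 1 heap_leaves_desc by blast
    hence "heap_label (Node l r) m ` (heap_leaves (Node l r) m \<inter> {u. heap_desc k u}) = labels (Node l r)"
      using heap_label_image[OF Node.prems(1), of "Node l r"] by simp
    thus ?thesis by simp
  next
    case 2
    have dk: "heap_desc (2 * m) k" using heap_nodes_desc[OF 2] .
    have "heap_leaves (Node l r) m \<inter> {u. heap_desc k u} = heap_leaves l (2 * m) \<inter> {u. heap_desc k u}"
      using dk heap_desc_trans heap_leaves_desc heap_desc_siblings_disjoint[OF Node.prems(1)] by fastforce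
    moreover have "heap_label (Node l r) m ` (heap_leaves l (2 * m) \<inter> {u. heap_desc k u})
        = heap_label l (2 * m) ` (heap_leaves l (2 * m) \<inter> {u. heap_desc k u})"
      using heap_label_Node_left by (intro image_cong) auto
    ultimately show ?thesis using Node.IH(1)[OF m2(1) 2] by simp
  next
    case 3
    have dk: "heap_desc (2 * m + 1) k" using heap_nodes_desc[OF 3] .
    have "heap_leaves (Node l r) m \<inter> {u. heap_desc k u} = heap_leaves r (2 * m + 1) \<inter> {u. heap_desc k u}"
      using dk heap_desc_trans heap_leaves_desc heap_desc_siblings_disjoint[OF Node.prems(1)] by fastforce
    moreover have "heap_label (Node l r) m ` (heap_leaves r (2 * m + 1) \<inter> {u. heap_desc k u})
        = heap_label r (2 * m + 1) ` (heap_leaves r (2 * m + 1) \<inter> {u. heap_desc k u})"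
      using heap_label_Node_right[OF Node.prems(1)] by (intro image_cong) auto
    ultimately show ?thesis using Node.IH(2)[OF m2(2) 3] by simp
  qed
qed

text \<open>The unrooted tree of a binary tree: the root \<open>1\<close> is removed and its children \<open>2\<close>
  and \<open>3\<close> are joined, so that every inner node has degree 3. The neighbour of \<open>k\<close>
  towards the former root is \<open>up_nbr k\<close>.\<close>
definition heap_tree_nodes :: "'a btree \<Rightarrow> nat set" where
  "heap_tree_nodes T = heap_nodes T 1 - {1}"

definition heap_tree_edges :: "'a btree \<Rightarrow> (nat \<times> nat) set" where
  "heap_tree_edges T = {(k div 2, k) | k. k \<in> heap_tree_nodes T \<and> 4 \<le> k}
     \<union> {(k, k div 2) | k. k \<in> heap_tree_nodes T \<and> 4 \<le> k} \<union> {(2, 3), (3, 2)}"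

definition up_nbr :: "nat \<Rightarrow> nat" where
  "up_nbr k = (if 4 \<le> k then k div 2 else 5 - k)"

declare heap_nodes.simps(2)[simp del] heap_leaves.simps(2)[simp del]

lemma not_heap_desc_2_3: "\<not> heap_desc 2 3"
proof
  assume "heap_desc 2 3"
  from heap_desc_le_double[OF this] show False by simp
qed

context
  fixes l r :: "'a btree"
begin

abbreviation "tr \<equiv> Node l r"
abbreviation "ns \<equiv> heap_tree_nodes tr"
abbreviation "es \<equiv> heap_tree_edges tr"
abbreviation "ls \<equiv> heap_leaves tr 1"

lemma ns_eq: "ns = heap_nodes l 2 \<union> heap_nodes r 3"
proof -
  have "1 \<notin> heap_nodes l 2" using heap_nodes_desc[of 1 l 2] heap_desc_le by fastforce
  moreover have "1 \<notin> heap_nodes r 3" using heap_nodes_desc[of 1 r 3] heap_desc_le by fastforce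
  ultimately show ?thesis unfolding heap_tree_nodes_def heap_nodes.simps(2) by auto
qed

lemma ns_ge_2: "k \<in> ns \<Longrightarrow> 2 \<le> k"
  unfolding ns_eq using heap_nodes_desc heap_desc_le by fastforce

lemma ns_2_3: "2 \<in> ns" "3 \<in> ns"
  unfolding ns_eq using heap_root_in_nodes[of 2 l] heap_root_in_nodes[of 3 r] by auto

lemma ns_heap_nodes: "k \<in> ns \<Longrightarrow> k \<in> heap_nodes tr 1"
  unfolding heap_tree_nodes_def by simp

lemma ns_parent: "k \<in> ns \<Longrightarrow> 4 \<le> k \<Longrightarrow> k div 2 \<in> ns"
proof -
  assume k: "k \<in> ns" "4 \<le> k"
  have "k div 2 \<in> heap_nodes tr 1" by (rule heap_nodes_parent[OF _ ns_heap_nodes[OF k(1)]]) (use k(2) in auto)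
  moreover have "k div 2 \<noteq> 1" using k(2) by auto
  ultimately show ?thesis unfolding heap_tree_nodes_def by blast
qed

lemma ns_children: "k \<in> ns \<Longrightarrow> (2 * k \<in> ns \<longleftrightarrow> k \<notin> ls) \<and> (2 * k + 1 \<in> ns \<longleftrightarrow> k \<notin> ls)"
proof -
  assume k: "k \<in> ns"
  have "(2 * k \<in> heap_nodes tr 1 \<longleftrightarrow> k \<notin> ls) \<and> (2 * k + 1 \<in> heap_nodes tr 1 \<longleftrightarrow> k \<notin> ls)"
    using heap_nodes_children[of 1 k tr] ns_heap_nodes[OF k] by simp
  moreover have "2 * k \<noteq> 1" "2 * k + 1 \<noteq> 1" using ns_ge_2[OF k] by auto
  ultimately show ?thesis unfolding heap_tree_nodes_def by simp
qed

lemma ls_subset_ns: "ls \<subseteq> ns"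
  unfolding heap_tree_nodes_def using heap_leaves_subset_nodes[of tr 1] root_not_in_heap_leaves[of 1 l r] by blast

lemma es_iff: "(x, y) \<in> es \<longleftrightarrow> (y \<in> ns \<and> 4 \<le> y \<and> x = y div 2) \<or> (x \<in> ns \<and> 4 \<le> x \<and> y = x div 2)
   \<or> (x = 2 \<and> y = 3) \<or> (x = 3 \<and> y = 2)"
  unfolding heap_tree_edges_def by auto

lemma es_subset: "es \<subseteq> ns \<times> ns"
  using ns_parent ns_2_3 unfolding es_iff[abs_def] by (auto simp: heap_tree_edges_def)

lemma es_sym: "sym es"
  unfolding sym_def es_iff by auto

lemma es_irrefl: "(x, x) \<notin> es"
  unfolding es_iff by auto

lemma up_nbr_edge: "b \<in> ns \<Longrightarrow> (b, up_nbr b) \<in> es"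
proof -
  assume b: "b \<in> ns"
  have "2 \<le> b" using ns_ge_2[OF b] .
  thus ?thesis unfolding es_iff up_nbr_def using b by (cases "4 \<le> b") auto
qed

lemma es_up_nbr: "(x, y) \<in> es \<Longrightarrow> y = up_nbr x \<or> x = up_nbr y"
  unfolding es_iff up_nbr_def by auto

lemma not_heap_desc_up_nbr: "b \<in> ns \<Longrightarrow> \<not> heap_desc b (up_nbr b)"
proof -
  assume b: "b \<in> ns"
  have b2: "2 \<le> b" using ns_ge_2[OF b] .
  show ?thesis
  proof (cases "4 \<le> b")
    case True thus ?thesis using heap_desc_le[of b "b div 2"] unfolding up_nbr_def by auto
  next
    case False
    hence "b = 2 \<or> b = 3" using b2 by auto
    thus ?thesis unfolding up_nbr_def using not_heap_desc_2_3 heap_desc_le[of 3 2] by auto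
  qed
qed

lemma heap_desc_step:
  assumes b: "b \<in> ns" and u: "heap_desc b u" and e: "(u, w) \<in> es - uedge b (up_nbr b)"
  shows "heap_desc b w"
proof -
  have b2: "2 \<le> b" using ns_ge_2[OF b] .
  have uw: "(u, w) \<in> es" "(u, w) \<noteq> (b, up_nbr b)" "(u, w) \<noteq> (up_nbr b, b)" using e by auto
  from uw(1) consider (dn) "4 \<le> w" "u = w div 2" | (up) "4 \<le> u" "w = u div 2" | (a) "u = 2" "w = 3" | (c) "u = 3" "w = 2"
    unfolding es_iff by auto
  thus ?thesis
  proof cases
    case dn
    have "w = 2 * u \<or> w = 2 * u + 1" using dn(2) by auto
    thus ?thesis using heap_desc_child[OF u] by auto
  next
    case up
    show ?thesis
    proof (cases "u = b")
      case True
      hence "w = up_nbr b" using up unfolding up_nbr_def by auto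
      thus ?thesis using uw(2) True by simp
    next
      case False thus ?thesis using heap_desc_parent[OF u] up(2) by simp
    qed
  next
    case a
    have "b \<le> 2" using heap_desc_le[OF u] a(1) by simp
    hence "b = 2" using b2 by simp
    thus ?thesis using uw(2) a unfolding up_nbr_def by simp
  next
    case c
    have "b \<le> 3" using heap_desc_le[OF u] c(1) by simp
    hence "b = 2 \<or> b = 3" using b2 by auto
    thus ?thesis
    proof
      assume "b = 2" thus ?thesis using u c(1) not_heap_desc_2_3 by simp
    next
      assume "b = 3" thus ?thesis using uw(2) c unfolding up_nbr_def by simp
    qed
  qed
qed

lemma side_up_nbr_heap_desc:
  assumes b: "b \<in> ns" and p: "(b, w) \<in> (es - uedge b (up_nbr b))\<^sup>*"
  shows "heap_desc b w"
  using p
proof (induction rule: rtrancl_induct)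
  case base thus ?case by (rule heap_desc_refl)
next
  case (step u w) thus ?case using heap_desc_step[OF b] by blast
qed

lemma heap_desc_side_up_nbr:
  assumes b: "b \<in> ns"
  shows "u \<in> ns \<Longrightarrow> heap_desc b u \<Longrightarrow> (b, u) \<in> (es - uedge b (up_nbr b))\<^sup>*"
proof (induction u rule: less_induct)
  case (less u)
  show ?case
  proof (cases "u = b")
    case True thus ?thesis by simp
  next
    case False
    have b2: "2 \<le> b" using ns_ge_2[OF b] .
    have u4: "4 \<le> u" "b < u" using heap_desc_le_double[OF less.prems(2) False] b2 by auto
    define p where "p = u div 2"
    have pd: "heap_desc b p" unfolding p_def using heap_desc_parent[OF less.prems(2) False] .
    have pN: "p \<in> ns" unfolding p_def using ns_parent[OF less.prems(1) u4(1)] .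
    have pl: "p < u" unfolding p_def using u4 by simp
    have IH: "(b, p) \<in> (es - uedge b (up_nbr b))\<^sup>*" using less.IH[OF pl pN pd] .
    have "(p, u) \<in> es" unfolding es_iff p_def using less.prems(1) u4 by auto
    moreover have "u \<noteq> up_nbr b" using u4 b2 unfolding up_nbr_def by auto
    ultimately have "(p, u) \<in> es - uedge b (up_nbr b)" using False by auto
    show ?thesis by (rule rtrancl_into_rtrancl[OF IH \<open>(p, u) \<in> es - uedge b (up_nbr b)\<close>])
  qed
qed

lemma es_rtrancl_2: "k \<in> ns \<Longrightarrow> (k, 2) \<in> es\<^sup>*"
proof (induction k rule: less_induct)
  case (less k)
  have k2: "2 \<le> k" using ns_ge_2[OF less.prems] .
  consider "k = 2" | "k = 3" | "4 \<le> k" using k2 by linarith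
  thus ?case
  proof cases
    case 1 thus ?thesis by simp
  next
    case 2
    have "(3, 2) \<in> es" unfolding es_iff by simp
    thus ?thesis using 2 by simp
  next
    case 3
    have "(k, k div 2) \<in> es" unfolding es_iff using less.prems 3 by auto
    moreover have "(k div 2, 2) \<in> es\<^sup>*" using less.IH[of "k div 2"] ns_parent[OF less.prems 3] 3 by simp
    ultimately show ?thesis by (rule converse_rtrancl_into_rtrancl)
  qed
qed

lemma heap_tree_is_tree: "is_tree ns es"
  unfolding is_tree_def
proof (intro conjI)
  show "finite ns" unfolding heap_tree_nodes_def using finite_heap_nodes[of tr 1] by simp
  show "ns \<noteq> {}" using ns_2_3 by auto
  show "es \<subseteq> ns \<times> ns" by (rule es_subset)
  show "sym es" by (rule es_sym)
  show "\<forall>x. (x, x) \<notin> es" using es_irrefl by auto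
  show "connected_in es ns" unfolding connected_in_def
  proof (intro ballI)
    fix x y assume x: "x \<in> ns" and y: "y \<in> ns"
    have "es \<inter> ns \<times> ns = es" using es_subset by auto
    moreover have "(x, 2) \<in> es\<^sup>*" using es_rtrancl_2[OF x] .
    moreover have "(2, y) \<in> es\<^sup>*" using rtrancl_sym_flip[OF es_sym es_rtrancl_2[OF y]] .
    ultimately show "(x, y) \<in> (es \<inter> ns \<times> ns)\<^sup>*" by simp
  qed
  show "\<forall>(x, y)\<in>es. (x, y) \<notin> (es - uedge x y)\<^sup>*"
  proof (intro ballI, clarify)
    fix x y assume e: "(x, y) \<in> es" and p: "(x, y) \<in> (es - uedge x y)\<^sup>*"
    have xN: "x \<in> ns" and yN: "y \<in> ns" using e es_subset by auto
    from es_up_nbr[OF e] show False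
    proof
      assume "y = up_nbr x"
      thus False using side_up_nbr_heap_desc[OF xN] p not_heap_desc_up_nbr[OF xN] by auto
    next
      assume o: "x = up_nbr y"
      have s: "sym (es - uedge x y)" using sym_Diff_uedge[OF es_sym] .
      have "(y, x) \<in> (es - uedge x y)\<^sup>*" using rtrancl_sym_flip[OF s p] .
      moreover have "uedge x y = uedge y (up_nbr y)" using o by auto
      ultimately have "heap_desc y x" using side_up_nbr_heap_desc[OF yN] by simp
      thus False using not_heap_desc_up_nbr[OF yN] o by simp
    qed
  qed
qed

lemma tree_side_up_nbr: "b \<in> ns \<Longrightarrow> tree_side ns es b (up_nbr b) = ns \<inter> {u. heap_desc b u}"
proof -
  assume b: "b \<in> ns"
  show ?thesis
  proof
    show "tree_side ns es b (up_nbr b) \<subseteq> ns \<inter> {u. heap_desc b u}"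
      using side_up_nbr_heap_desc[OF b] unfolding tree_side_def by auto
    show "ns \<inter> {u. heap_desc b u} \<subseteq> tree_side ns es b (up_nbr b)"
      using heap_desc_side_up_nbr[OF b] unfolding tree_side_def by auto
  qed
qed

lemma es_nbrs: "t \<in> ns \<Longrightarrow> {u. (t, u) \<in> es} = insert (up_nbr t) (if t \<in> ls then {} else {2 * t, 2 * t + 1})"
proof -
  assume t: "t \<in> ns"
  have t2: "2 \<le> t" using ns_ge_2[OF t] .
  show ?thesis
  proof
    show "{u. (t, u) \<in> es} \<subseteq> insert (up_nbr t) (if t \<in> ls then {} else {2 * t, 2 * t + 1})"
    proof
      fix u assume "u \<in> {u. (t, u) \<in> es}"
      hence e: "(t, u) \<in> es" by simp
      have uN: "u \<in> ns" using e es_subset by auto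
      from e consider (dn) "4 \<le> u" "t = u div 2" | (up) "4 \<le> t" "u = t div 2" | (a) "t = 2" "u = 3" | (c) "t = 3" "u = 2"
        unfolding es_iff by auto
      thus "u \<in> insert (up_nbr t) (if t \<in> ls then {} else {2 * t, 2 * t + 1})"
      proof cases
        case dn
        have "u = 2 * t \<or> u = 2 * t + 1" using dn(2) by auto
        moreover hence "t \<notin> ls" using ns_children[OF t] uN by auto
        ultimately show ?thesis by auto
      qed (auto simp: up_nbr_def)
    qed
    show "insert (up_nbr t) (if t \<in> ls then {} else {2 * t, 2 * t + 1}) \<subseteq> {u. (t, u) \<in> es}"
    proof
      fix u assume u: "u \<in> insert (up_nbr t) (if t \<in> ls then {} else {2 * t, 2 * t + 1})"
      show "u \<in> {u. (t, u) \<in> es}"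
      proof (cases "u = up_nbr t")
        case True thus ?thesis using up_nbr_edge[OF t] by simp
      next
        case False
        hence "t \<notin> ls" "u = 2 * t \<or> u = 2 * t + 1" using u by (auto split: if_splits)
        moreover hence "u \<in> ns" using ns_children[OF t] by auto
        ultimately show ?thesis unfolding es_iff using t2 by auto
      qed
    qed
  qed
qed

lemma tree_degree_es: "t \<in> ns \<Longrightarrow> tree_degree es t = (if t \<in> ls then 1 else 3)"
proof -
  assume t: "t \<in> ns"
  have t2: "2 \<le> t" using ns_ge_2[OF t] .
  have o: "up_nbr t \<noteq> 2 * t" "up_nbr t \<noteq> 2 * t + 1" using t2 unfolding up_nbr_def by auto
  show ?thesis unfolding tree_degree_def es_nbrs[OF t] using o by auto
qed

lemma tree_leaves_es: "tree_leaves ns es = ls"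
  unfolding tree_leaves_def using tree_degree_es ls_subset_ns by (auto split: if_splits)

lemma tree_side_es_compl: "(x, y) \<in> es \<Longrightarrow> tree_side ns es y x = ns - tree_side ns es x y"
proof -
  assume e: "(x, y) \<in> es"
  have "\<forall>z\<in>ns. z \<in> tree_side ns es x y \<or> z \<in> tree_side ns es y x"
    using tree_side_cover[OF heap_tree_is_tree e] by blast
  moreover have "tree_side ns es x y \<inter> tree_side ns es y x = {}" using tree_sides_disjoint[OF heap_tree_is_tree e] .
  moreover have "tree_side ns es y x \<subseteq> ns" using tree_side_subset[OF heap_tree_is_tree] .
  ultimately show ?thesis by blast
qed

lemma heap_tree_rank_decomposition:
  assumes "distinct_labels tr" "labels tr = verts G"
  shows "rank_decomposition G ns es (heap_label tr 1)"
  unfolding rank_decomposition_def tree_leaves_es bij_betw_def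
  using heap_tree_is_tree tree_degree_es heap_label_inj[of 1 tr] heap_label_image[of 1 tr] assms by auto

lemma heap_tree_cut_cluster:
  assumes d: "distinct_labels tr" and lv: "labels tr = verts G" and e: "(s, t) \<in> es"
  shows "leaf_side ns es (heap_label tr 1) s t \<in> clusters tr
    \<or> verts G - leaf_side ns es (heap_label tr 1) s t \<in> clusters tr"
proof -
  let ?f = "heap_label tr 1"
  have side: "leaf_side ns es ?f b (up_nbr b) = ?f ` (ls \<inter> {u. heap_desc b u})" if "b \<in> ns" for b
    unfolding leaf_side_def tree_leaves_es tree_side_up_nbr[OF that] using ls_subset_ns by blast
  have cluster: "?f ` (ls \<inter> {u. heap_desc b u}) \<in> clusters tr" if "b \<in> ns" for b
    using heap_label_subtree_cluster[of 1 b tr] that unfolding heap_tree_nodes_def by simp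
  from es_up_nbr[OF e] show ?thesis
  proof
    assume "t = up_nbr s"
    moreover have "s \<in> ns" using e es_subset by auto
    ultimately have "leaf_side ns es ?f s t \<in> clusters tr"
      using side[of s] cluster[of s] by (simp only:)
    thus ?thesis ..
  next
    assume s: "s = up_nbr t"
    have "leaf_side ns es ?f s t = ?f ` (ls - (ls \<inter> tree_side ns es t s))"
      unfolding leaf_side_def tree_leaves_es tree_side_es_compl[OF es_sym[THEN symD, OF e]]
      using ls_subset_ns by blast
    also have "\<dots> = verts G - leaf_side ns es ?f t s"
      using heap_label_inj[of 1 tr] heap_label_image[of 1 tr] d lv
      unfolding leaf_side_def tree_leaves_es by (simp add: inj_on_image_set_diff)
    also have "\<dots> = verts G - ?f ` (ls \<inter> {u. heap_desc t u})"
      using side[of t] s e es_subset by auto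
    finally have "verts G - leaf_side ns es ?f s t = ?f ` (ls \<inter> {u. heap_desc t u})"
      using heap_label_image[of 1 tr] lv by auto
    moreover have "t \<in> ns" using e es_subset by auto
    ultimately have "verts G - leaf_side ns es ?f s t \<in> clusters tr" using cluster by simp
    thus ?thesis ..
  qed
qed

end

lemma rank_decomposition_of_btree:
  assumes d: "distinct_labels T" and lv: "labels T = verts G"
  obtains N E f where "rank_decomposition G N E f"
    "\<And>s t. (s, t) \<in> E \<Longrightarrow> leaf_side N E f s t \<in> clusters T \<or> verts G - leaf_side N E f s t \<in> clusters T"
proof (cases T)
  case (Leaf a)
  have "is_tree {1} {}" "tree_leaves {1} {} = {1}"
    unfolding is_tree_def connected_in_def tree_leaves_def tree_degree_def by auto
  moreover have "bij_betw (\<lambda>_. a) {1::nat} (verts G)" using lv Leaf unfolding bij_betw_def by auto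
  ultimately have "rank_decomposition G {1} {} (\<lambda>_. a)" unfolding rank_decomposition_def by auto
  thus thesis using that by blast
next
  case (Node l r)
  thus thesis using that heap_tree_rank_decomposition heap_tree_cut_cluster d lv by blast
qed

section \<open>From tree-decompositions to rank-decompositions\<close>

definition has_btree :: "('a set \<Rightarrow> bool) \<Rightarrow> 'a set \<Rightarrow> bool" where
  "has_btree Q A \<longleftrightarrow> (\<exists>T. labels T = A \<and> distinct_labels T \<and> (\<forall>X\<in>clusters T. Q X))"

lemma has_btree_mono: "has_btree Q A \<Longrightarrow> (\<And>X. Q X \<Longrightarrow> Q' X) \<Longrightarrow> has_btree Q' A"
  unfolding has_btree_def by blast

lemma has_btree_singleton: "Q {a} \<Longrightarrow> has_btree Q {a}"
  unfolding has_btree_def by (intro exI[of _ "Leaf a"]) simp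

lemma has_btree_Un:
  assumes "has_btree Q A" "has_btree Q B" "A \<inter> B = {}" "Q (A \<union> B)"
  shows "has_btree Q (A \<union> B)"
proof -
  obtain TA TB where "labels TA = A" "distinct_labels TA" "\<forall>X\<in>clusters TA. Q X"
    "labels TB = B" "distinct_labels TB" "\<forall>X\<in>clusters TB. Q X"
    using assms(1,2) unfolding has_btree_def by blast
  thus ?thesis unfolding has_btree_def using assms(3,4)
    by (intro exI[of _ "Node TA TB"]) (simp add: ball_Un)
qed

lemma has_btree_Union:
  assumes "finite F" "F \<noteq> {}" "\<And>B. B \<in> F \<Longrightarrow> has_btree Q B" "pairwise disjnt F"
    "\<And>F'. F' \<subseteq> F \<Longrightarrow> F' \<noteq> {} \<Longrightarrow> Q (\<Union>F')"
  shows "has_btree Q (\<Union>F)"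
  using assms
proof (induction F rule: finite_ne_induct)
  case (insert B F)
  have "has_btree Q (\<Union>F)"
  proof (rule insert.IH)
    show "pairwise disjnt F" using insert.prems(2) by (simp add: pairwise_insert)
    show "Q (\<Union>F')" if "F' \<subseteq> F" "F' \<noteq> {}" for F' using insert.prems(3)[of F'] that by auto
  qed (use insert.prems(1) in simp)
  moreover have "B \<inter> \<Union>F = {}"
    using insert.prems(2) insert.hyps(3) unfolding pairwise_def disjnt_def by auto
  moreover have "has_btree Q B" using insert.prems(1) by simp
  moreover have "Q (B \<union> \<Union>F)" using insert.prems(3)[of "insert B F"] by simp
  ultimately show ?case using has_btree_Un[of Q B "\<Union>F"] by simp
qed simp

lemma has_btree_Un_singletons:
  assumes "finite S" "A \<inter> S = {}" "A = {} \<or> has_btree Q A" "\<And>s. s \<in> S \<Longrightarrow> Q {s}"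
    "\<And>S'. S' \<subseteq> S \<Longrightarrow> S' \<noteq> {} \<Longrightarrow> Q (A \<union> S')" "A \<union> S \<noteq> {}"
  shows "has_btree Q (A \<union> S)"
  using assms
proof (induction S rule: finite_induct)
  case (insert s S)
  show ?case
  proof (cases "A \<union> S = {}")
    case True
    thus ?thesis using has_btree_singleton[of Q s] insert.prems(3) by simp
  next
    case False
    have "has_btree Q (A \<union> S)"
    proof (rule insert.IH)
      show "Q (A \<union> S')" if "S' \<subseteq> S" "S' \<noteq> {}" for S' using insert.prems(4) that by blast
    qed (use insert.prems False in auto)
    moreover have "has_btree Q {s}" using insert.prems(3) by (simp add: has_btree_singleton)
    moreover have "(A \<union> S) \<inter> {s} = {}" using insert.prems(1) insert.hyps(2) by auto
    moreover have "Q ((A \<union> S) \<union> {s})" using insert.prems(4)[of "insert s S"] by simp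
    ultimately have "has_btree Q ((A \<union> S) \<union> {s})" by (rule has_btree_Un)
    thus ?thesis by simp
  qed
qed simp

lemma has_btree_exists: "finite A \<Longrightarrow> A \<noteq> {} \<Longrightarrow> has_btree (\<lambda>_. True) A"
  using has_btree_Un_singletons[of A "{}" "\<lambda>_. True"] by simp

context
  fixes G :: "'a graph" and N E bag
  assumes G: "finite_graph G" and td: "tree_decomposition G N E bag"
begin

lemma td_tree: "is_tree N E"
  and td_cover: "v \<in> verts G \<Longrightarrow> \<exists>t\<in>N. v \<in> bag t"
  and td_edge: "adj G u v \<Longrightarrow> \<exists>t\<in>N. u \<in> bag t \<and> v \<in> bag t"
  and td_connected: "v \<in> verts G \<Longrightarrow> connected_in E {t \<in> N. v \<in> bag t}"
  using td unfolding tree_decomposition_def by auto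

definition guarded :: "'a set \<Rightarrow> bool" where
  "guarded X \<longleftrightarrow> (\<exists>x. X = {x}) \<or> (\<exists>t\<in>N. \<forall>x\<in>X. \<forall>y. adj G x y \<and> y \<notin> X \<longrightarrow> y \<in> bag t)"

text \<open>For \<open>p = c\<close> the side \<open>tree_side N E c c\<close> is all of \<open>N\<close>, so \<open>below c c = verts G\<close>.\<close>
definition below :: "nat \<Rightarrow> nat \<Rightarrow> 'a set" where
  "below c p = {v \<in> verts G. {t \<in> N. v \<in> bag t} \<subseteq> tree_side N E c p}"

lemma below_if_not_in_bag:
  assumes e: "(c, c') \<in> E" and t: "t \<in> N" "v \<in> bag t" "t \<in> tree_side N E c' c"
    and v: "v \<in> verts G" "v \<notin> bag c"
  shows "v \<in> below c' c"
  using connected_subset_tree_side[OF td_tree e td_connected[OF v(1)]] t v unfolding below_def by blast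

lemma adj_below_child:
  assumes e: "(c, c') \<in> E" and x: "x \<in> below c' c" and a: "adj G x y" and y: "y \<notin> bag c"
  shows "y \<in> below c' c"
proof -
  obtain t where "t \<in> N" "x \<in> bag t" "y \<in> bag t" using td_edge[OF a] by blast
  thus ?thesis using below_if_not_in_bag[OF e] x y finite_graph_adjD[OF G a] unfolding below_def by blast
qed

lemma below_outside_bag:
  assumes c: "c \<in> N" and t: "t \<in> N" "v \<in> bag t" "t \<in> tree_side N E c p" and v: "v \<in> verts G" "v \<notin> bag c"
  obtains c' where "(c, c') \<in> E" "c' \<noteq> p" "v \<in> below c' c"
proof -
  have "t \<noteq> c" using t(2) v(2) by auto
  then obtain c' where "(c, c') \<in> E" "c' \<noteq> p" "t \<in> tree_side N E c' c"
    using tree_side_child[OF td_tree c t(3)] by blast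
  thus thesis using that below_if_not_in_bag t v by blast
qed

lemma adj_below_escapes:
  assumes c: "c \<in> N" and x: "x \<in> below c p" and a: "adj G x y" and y: "y \<notin> bag c"
  obtains c' where "(c, c') \<in> E" "c' \<noteq> p" "y \<in> below c' c"
proof -
  obtain t where "t \<in> N" "x \<in> bag t" "y \<in> bag t" using td_edge[OF a] by blast
  thus thesis using below_outside_bag[OF c] that x y finite_graph_adjD[OF G a] unfolding below_def by blast
qed

lemma below_child_subset: "(c, c') \<in> E \<Longrightarrow> c' \<noteq> p \<Longrightarrow> below c' c \<subseteq> below c p"
  unfolding below_def using tree_side_child_subset[OF td_tree] by blast

lemma below_child_disjoint_bag: "(c, c') \<in> E \<Longrightarrow> below c' c \<inter> bag c = {}"
  unfolding below_def
  using tree_side_other_end[OF td_tree tree_edge_sym[OF td_tree]] tree_edgeD[OF td_tree] by blast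

lemma below_children_disjoint:
  assumes "(c, c1) \<in> E" "(c, c2) \<in> E" "c1 \<noteq> c2"
  shows "below c1 c \<inter> below c2 c = {}"
proof (rule ccontr)
  assume "below c1 c \<inter> below c2 c \<noteq> {}"
  then obtain v where v: "v \<in> below c1 c" "v \<in> below c2 c" by auto
  then obtain t where t: "t \<in> N" "v \<in> bag t" using td_cover unfolding below_def by blast
  hence "t \<in> tree_side N E c1 c" "t \<in> tree_side N E c2 c" using v unfolding below_def by auto
  moreover have "tree_side N E c2 c \<subseteq> tree_side N E c c1"
    using tree_side_child_subset[OF td_tree assms(2) assms(3)[symmetric]] by blast
  ultimately show False using tree_sides_disjoint[OF td_tree assms(1)] by blast
qed

lemma below_eq:
  assumes c: "c \<in> N"
  shows "below c p = (\<Union>c'\<in>{c'. (c, c') \<in> E \<and> c' \<noteq> p}. below c' c) \<union> (below c p \<inter> bag c)"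
proof
  show "below c p \<subseteq> (\<Union>c'\<in>{c'. (c, c') \<in> E \<and> c' \<noteq> p}. below c' c) \<union> (below c p \<inter> bag c)"
  proof
    fix v assume v: "v \<in> below c p"
    hence vV: "v \<in> verts G" unfolding below_def by auto
    then obtain t where "t \<in> N" "v \<in> bag t" using td_cover by blast
    moreover from this have "t \<in> tree_side N E c p" using v unfolding below_def by auto
    ultimately show "v \<in> (\<Union>c'\<in>{c'. (c, c') \<in> E \<and> c' \<noteq> p}. below c' c) \<union> (below c p \<inter> bag c)"
      using below_outside_bag[OF c _ _ _ vV] v by (cases "v \<in> bag c") blast+
  qed
qed (use below_child_subset in blast)

lemma guarded_Union_below_children:
  assumes c: "c \<in> N" and F: "F \<subseteq> (\<lambda>c'. below c' c) ` {c'. (c, c') \<in> E}"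
  shows "guarded (\<Union>F)"
proof -
  have "y \<in> bag c" if "x \<in> \<Union>F" "adj G x y" "y \<notin> \<Union>F" for x y
    using that F adj_below_child by blast
  thus ?thesis unfolding guarded_def using c by blast
qed

lemma guarded_below_children_Un:
  assumes c: "c \<in> N" and S: "S \<subseteq> below c p"
  shows "guarded ((\<Union>c'\<in>{c'. (c, c') \<in> E \<and> c' \<noteq> p}. below c' c) \<union> S)"
proof -
  let ?X = "(\<Union>c'\<in>{c'. (c, c') \<in> E \<and> c' \<noteq> p}. below c' c) \<union> S"
  have "y \<in> bag c" if x: "x \<in> ?X" and xy: "adj G x y" and y: "y \<notin> ?X" for x y
  proof (rule ccontr)
    assume "y \<notin> bag c"
    from x show False
    proof
      assume "x \<in> S"
      then obtain c' where "(c, c') \<in> E" "c' \<noteq> p" "y \<in> below c' c"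
        using adj_below_escapes[OF c] S xy \<open>y \<notin> bag c\<close> by blast
      thus False using y by blast
    qed (use y xy adj_below_child \<open>y \<notin> bag c\<close> in blast)
  qed
  thus ?thesis unfolding guarded_def using c by blast
qed

text \<open>The vertices below a node are arranged in a binary tree by joining the trees of the
  children (available by induction) and then adding the vertices of the node's own bag
  one at a time.\<close>
lemma has_btree_below:
  assumes "c \<in> N" "p = c \<or> (c, p) \<in> E" "below c p \<noteq> {}"
  shows "has_btree guarded (below c p)"
  using assms
proof (induction "card (tree_side N E c p)" arbitrary: c p rule: less_induct)
  case less
  define ch where "ch = {c'. (c, c') \<in> E \<and> c' \<noteq> p}"
  define F where "F = (\<lambda>c'. below c' c) ` {c' \<in> ch. below c' c \<noteq> {}}"
  define S where "S = below c p \<inter> bag c"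
  have UF: "\<Union>F = (\<Union>c'\<in>ch. below c' c)" unfolding F_def by auto
  have "finite ch" unfolding ch_def using finite_tree_nbrs[OF td_tree, of c] by (simp add: finite_subset)
  have blocks: "has_btree guarded B" if B: "B \<in> F" for B
  proof -
    obtain c' where c': "(c, c') \<in> E" "c' \<noteq> p" "below c' c \<noteq> {}" "B = below c' c"
      using B unfolding F_def ch_def by auto
    have "tree_side N E c' c \<subset> tree_side N E c p"
      using tree_side_child_subset[OF td_tree c'(1,2)] tree_side_self[OF td_tree less.prems(1)] by blast
    hence "card (tree_side N E c' c) < card (tree_side N E c p)"
      using tree_finite[OF td_tree] tree_side_subset[OF td_tree] by (meson psubset_card_mono rev_finite_subset)
    thus ?thesis using less.hyps c' tree_edge_sym[OF td_tree] tree_edgeD[OF td_tree] by blast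
  qed
  have "\<Union>F = {} \<or> has_btree guarded (\<Union>F)"
  proof (cases "F = {}")
    case False
    have "pairwise disjnt F"
      unfolding F_def ch_def pairwise_def disjnt_def using below_children_disjoint by fastforce
    moreover have "guarded (\<Union>F')" if "F' \<subseteq> F" for F'
      using guarded_Union_below_children[OF less.prems(1)] that unfolding F_def ch_def by blast
    ultimately show ?thesis using has_btree_Union[of F] blocks False \<open>finite ch\<close> unfolding F_def by auto
  qed simp
  moreover have "below c p = \<Union>F \<union> S" using below_eq[OF less.prems(1)] unfolding UF ch_def S_def .
  moreover have "\<Union>F \<inter> S = {}" using below_child_disjoint_bag unfolding UF ch_def S_def by blast
  moreover have "finite S" unfolding S_def below_def using finite_graph_finite_verts[OF G] by simp
  moreover have "guarded (\<Union>F \<union> S')" if "S' \<subseteq> S" for S'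
    using guarded_below_children_Un[OF less.prems(1)] that unfolding UF ch_def S_def by blast
  ultimately show ?case
    using has_btree_Un_singletons[of S "\<Union>F" guarded] less.prems(3) unfolding guarded_def by auto
qed

lemma has_btree_guarded_verts:
  assumes "verts G \<noteq> {}"
  shows "has_btree guarded (verts G)"
proof -
  obtain r where r: "r \<in> N" using tree_nonempty[OF td_tree] by blast
  have "below r r = verts G" unfolding below_def tree_side_loop[OF td_tree r] by auto
  thus ?thesis using has_btree_below[OF r, of r] assms by simp
qed

lemma cutrank_guarded:
  assumes w: "\<forall>t\<in>N. card (classes_meeting G (bag t)) \<le> w" and X: "guarded X"
  shows "cutrank G X \<le> max 1 w \<and> cutrank G (verts G - X) \<le> max 1 w"
proof (cases "\<exists>x. X = {x}")
  case True
  then obtain x where "X = {x}" by blast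
  hence "card (classes_meeting G X) \<le> 1" using card_classes_meeting_le[of X G] by simp
  moreover have "cutrank G X \<le> card (classes_meeting G X)"
    by (rule cutrank_le_card_classes_meeting_rows[OF G]) simp
  moreover have "cutrank G (verts G - X) \<le> card (classes_meeting G X)"
    by (rule cutrank_le_card_classes_meeting_cols[OF G]) simp
  ultimately show ?thesis by (simp add: le_max_iff_disj)
next
  case False
  then obtain t where t: "t \<in> N" "\<forall>x\<in>X. \<forall>y. adj G x y \<and> y \<notin> X \<longrightarrow> y \<in> bag t"
    using X unfolding guarded_def by blast
  have "cutrank G X \<le> card (classes_meeting G (bag t))"
    using t(2) by (intro cutrank_le_card_classes_meeting_cols[OF G]) blast
  moreover have "cutrank G (verts G - X) \<le> card (classes_meeting G (bag t))"
    using t(2) finite_graph_adj_sym[OF G] by (intro cutrank_le_card_classes_meeting_rows[OF G]) blast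
  moreover have "card (classes_meeting G (bag t)) \<le> w" using w t(1) by blast
  ultimately show ?thesis by (simp add: le_max_iff_disj)
qed

end

section \<open>Rank-width versus class-width\<close>

lemma cutrank_le_card_verts: "finite (verts G) \<Longrightarrow> cutrank G X \<le> card (verts G)"
  by (rule cutrank_le) (auto intro: card_mono)

lemma rank_decomposition_of_has_btree:
  assumes G: "finite_graph G"
    and T: "has_btree (\<lambda>X. cutrank G X \<le> w \<and> cutrank G (verts G - X) \<le> w) (verts G)"
  obtains N E f where "rank_decomposition G N E f" "\<forall>(s, t)\<in>E. cutrank G (leaf_side N E f s t) \<le> w"
proof -
  obtain T where T: "labels T = verts G" "distinct_labels T"
    "\<forall>X\<in>clusters T. cutrank G X \<le> w \<and> cutrank G (verts G - X) \<le> w"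
    using T unfolding has_btree_def by blast
  obtain N E f where rd: "rank_decomposition G N E f" and cuts:
    "\<And>s t. (s, t) \<in> E \<Longrightarrow> leaf_side N E f s t \<in> clusters T \<or> verts G - leaf_side N E f s t \<in> clusters T"
    using rank_decomposition_of_btree[OF T(2,1)] by blast
  have "cutrank G (leaf_side N E f s t) \<le> w" if "(s, t) \<in> E" for s t
  proof -
    have "verts G - (verts G - leaf_side N E f s t) = leaf_side N E f s t"
      using leaf_side_subset[OF G rd] by blast
    thus ?thesis using cuts[OF that] T(3) by metis
  qed
  thus thesis using that rd by blast
qed

lemma rankwidth_le_of_has_btree:
  assumes "finite_graph G"
    and "has_btree (\<lambda>X. cutrank G X \<le> w \<and> cutrank G (verts G - X) \<le> w) (verts G)"
  shows "rankwidth G \<le> w"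
proof -
  obtain N E f where "rank_decomposition G N E f" "\<forall>(s, t)\<in>E. cutrank G (leaf_side N E f s t) \<le> w"
    using rank_decomposition_of_has_btree[OF assms] .
  thus ?thesis unfolding rankwidth_def leaf_side_def by (intro wellorder_Inf_le1) blast
qed

lemma rankwidth_witness:
  assumes G: "finite_graph G" and ne: "verts G \<noteq> {}"
  obtains N E f where "rank_decomposition G N E f"
    "\<forall>(s, t)\<in>E. cutrank G (leaf_side N E f s t) \<le> rankwidth G"
proof -
  have "has_btree (\<lambda>X. cutrank G X \<le> card (verts G) \<and> cutrank G (verts G - X) \<le> card (verts G)) (verts G)"
    using has_btree_exists[OF finite_graph_finite_verts[OF G] ne]
    by (rule has_btree_mono) (simp add: cutrank_le_card_verts[OF finite_graph_finite_verts[OF G]])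
  then obtain N E f where "rank_decomposition G N E f"
    "\<forall>(s, t)\<in>E. cutrank G (leaf_side N E f s t) \<le> card (verts G)"
    using rank_decomposition_of_has_btree[OF G] by blast
  hence "card (verts G) \<in> {w. \<exists>N E f. rank_decomposition G N E f \<and>
      (\<forall>(s, t)\<in>E. cutrank G (f ` (tree_leaves N E \<inter> tree_side N E s t)) \<le> w)}"
    unfolding leaf_side_def by blast
  from wellorder_InfI[OF this] show thesis
    using that unfolding rankwidth_def leaf_side_def by blast
qed

text \<open>Without vertices there may be no rank-decomposition at all (a tree has a leaf), in
  which case the rank-width is the unspecified value \<open>Inf {}\<close>.\<close>
lemma rankwidth_empty_graph:
  assumes "verts G = {}"
  shows "rankwidth G \<le> Inf ({} :: nat set)"
proof (cases "\<exists>N E f. rank_decomposition G N E f")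
  case True
  hence "rankwidth G \<le> 0"
    unfolding rankwidth_def using cutrank_empty_graph[OF assms] by (intro wellorder_Inf_le1) auto
  thus ?thesis by simp
qed (simp add: rankwidth_def)

lemma rankwidth_le_class_width:
  assumes G: "finite_graph G" and ne: "verts G \<noteq> {}"
  shows "rankwidth G \<le> max 1 (class_width G)"
proof -
  obtain N E bag where td: "tree_decomposition G N E bag"
    and w: "\<forall>t\<in>N. card (classes_meeting G (bag t)) \<le> class_width G"
    using class_width_witness[OF G] .
  show ?thesis
    using has_btree_guarded_verts[OF G td ne] cutrank_guarded[OF G td w]
    by (intro rankwidth_le_of_has_btree[OF G]) (rule has_btree_mono)
qed

lemma class_width_le_rankwidth:
  assumes G: "finite_graph G" and M: "\<And>b. card (classes_meeting G {u. adj G b u}) \<le> M"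
  shows "class_width G \<le> 1 + 3 * (2 * (2 ^ rankwidth G * M))"
proof (cases "verts G = {}")
  case True
  hence "card (classes_meeting G (verts G)) = 0" by (simp add: classes_meeting_def)
  thus ?thesis using class_width_le[OF tree_decomposition_single_bag[OF G]] by simp
next
  case False
  then obtain N E f where rd: "rank_decomposition G N E f"
    and k: "\<forall>(s, t)\<in>E. cutrank G (leaf_side N E f s t) \<le> rankwidth G"
    using rankwidth_witness[OF G] by blast
  show ?thesis
    using class_width_le[OF rank_decomposition_tree_decomposition[OF G rd]]
      card_classes_meeting_boundary_bag[OF G rd k M] by blast
qed

lemma neighbourhood_classes_bound:
  obtains M where "\<And>(G :: 'a graph) b. finite_graph G \<Longrightarrow> omega_tilde G \<le> d \<Longrightarrow> alpha_star G \<le> d \<Longrightarrow>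
    card (classes_meeting G {u. adj G b u}) \<le> M"
proof -
  obtain B where B: "\<And>(G :: 'a graph) Y. finite_graph G \<Longrightarrow> omega_tilde G \<le> d \<Longrightarrow>
      (\<And>I. independent G I \<Longrightarrow> I \<subseteq> Y \<Longrightarrow> card I \<le> d) \<Longrightarrow> card (classes_meeting G Y) < B"
    using classes_meeting_ramsey_bound by blast
  have "card (classes_meeting G {u. adj G b u}) \<le> B"
    if G: "finite_graph G" and om: "omega_tilde G \<le> d" and al: "alpha_star G \<le> d" for G :: "'a graph" and b
  proof -
    have "card I \<le> d" if I: "independent G I" "I \<subseteq> {u. adj G b u}" for I
    proof (cases "b \<in> verts G")
      case True
      have "I \<subseteq> closed_nbhd G b" using I finite_graph_adjD[OF G] unfolding closed_nbhd_def by auto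
      hence "card I \<le> alpha (induced G (closed_nbhd G b))" using card_le_alpha_induced[OF G I(1)] by blast
      also have "\<dots> \<le> d" using alpha_closed_nbhd_le_alpha_star[OF G True] al by simp
      finally show ?thesis .
    next
      case False
      hence "I = {}" using I(2) finite_graph_adjD[OF G] by blast
      thus ?thesis by simp
    qed
    thus ?thesis using B[OF G om] by (meson less_imp_le)
  qed
  thus thesis using that by blast
qed

lemma width_parameter_le_class_width:
  assumes G: "finite_graph G"
    and q: "q \<in> {alpha_treewidth, rankwidth, (\<lambda>G. treewidth (clique_quotient G))}"
  shows "q G \<le> max (max 1 (class_width G)) (Inf ({} :: nat set))"
proof -
  have "rankwidth G \<le> max (max 1 (class_width G)) (Inf ({} :: nat set))"
    using rankwidth_le_class_width[OF G] rankwidth_empty_graph[of G]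
    by (cases "verts G = {}") (simp_all add: le_max_iff_disj)
  thus ?thesis
    using q alpha_treewidth_le_class_width[OF G] treewidth_clique_quotient_le_class_width[OF G]
    by (auto simp: le_max_iff_disj)
qed

lemma class_width_bounded_by_width_parameter:
  fixes \<G> :: "'a graph set"
  assumes G: "\<And>G. G \<in> \<G> \<Longrightarrow> finite_graph G \<and> omega_tilde G \<le> d \<and> alpha_star G \<le> d"
    and p: "p \<in> {alpha_treewidth, rankwidth, (\<lambda>G. treewidth (clique_quotient G))}"
  shows "\<exists>f. \<forall>G\<in>\<G>. class_width G \<le> f (p G)"
proof -
  obtain f\<^sub>\<alpha> where "\<And>G :: 'a graph. finite_graph G \<Longrightarrow> omega_tilde G \<le> d \<Longrightarrow>
      class_width G \<le> f\<^sub>\<alpha> (alpha_treewidth G)"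
    using class_width_bounded_by_alpha_treewidth by blast
  hence "\<forall>G\<in>\<G>. class_width G \<le> f\<^sub>\<alpha> (alpha_treewidth G)" using G by blast
  moreover obtain M where "\<And>(G :: 'a graph) b. finite_graph G \<Longrightarrow> omega_tilde G \<le> d \<Longrightarrow>
      alpha_star G \<le> d \<Longrightarrow> card (classes_meeting G {u. adj G b u}) \<le> M"
    using neighbourhood_classes_bound by blast
  hence "\<forall>G\<in>\<G>. class_width G \<le> 1 + 3 * (2 * (2 ^ rankwidth G * M))"
    using class_width_le_rankwidth G by blast
  moreover have "\<forall>G\<in>\<G>. class_width G \<le> treewidth (clique_quotient G)"
    using class_width_le_treewidth_clique_quotient G by blast
  ultimately show ?thesis using p by auto
qed

theorem theorem8p4:
  fixes d :: nat and \<G> :: "'a graph set"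
  assumes "d > 0"
    and "\<forall>G\<in>\<G>. finite_graph G"
    and "hereditary \<G>"
    and "\<forall>G\<in>\<G>. max (alpha_star G) (omega_tilde G) \<le> d"
  shows "\<forall>p \<in> {alpha_treewidth, rankwidth, (\<lambda>G. treewidth (clique_quotient G))}.
         \<forall>q \<in> {alpha_treewidth, rankwidth, (\<lambda>G. treewidth (clique_quotient G))}.
           \<exists>g :: nat \<Rightarrow> nat. \<forall>G\<in>\<G>. q G \<le> g (p G)"
proof (intro ballI)
  fix p q :: "'a graph \<Rightarrow> nat"
  assume p: "p \<in> {alpha_treewidth, rankwidth, (\<lambda>G. treewidth (clique_quotient G))}"
    and q: "q \<in> {alpha_treewidth, rankwidth, (\<lambda>G. treewidth (clique_quotient G))}"
  have G: "\<And>G. G \<in> \<G> \<Longrightarrow> finite_graph G \<and> omega_tilde G \<le> d \<and> alpha_star G \<le> d"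
    using assms(2,4) by auto
  obtain f where "\<forall>G\<in>\<G>. class_width G \<le> f (p G)"
    using class_width_bounded_by_width_parameter[OF G p] by blast
  hence "\<forall>G\<in>\<G>. q G \<le> max (max 1 (f (p G))) (Inf ({} :: nat set))"
    using width_parameter_le_class_width[OF _ q] G by (meson max.mono order.refl order_trans)
  thus "\<exists>g. \<forall>G\<in>\<G>. q G \<le> g (p G)" by (intro exI[of _ "\<lambda>k. max (max 1 (f k)) (Inf {})"])
qed

end
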